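(* For any strictly feasible starting point $z^0\in F$ and any $\mu>0$, $\varepsilon>0$, Algorithm IP-FB$(z^0,\mu,\varepsilon)$ (described in the context) terminates after finitely many iterations and returns a point $z^\star$ that is $\varepsilon$-stationary for $q_\mu$, i.e. $\operatorname{dist}(0,\hat\partial q_\mu(z^\star))\leq\varepsilon$, and satisfies $q_\mu(z^\star)\leq q_\mu(z^0)$.
   Context: Setting: $f:\mathbb{R}^n\to\mathbb{R}$ has locally Lipschitz continuous gradient; $g:\mathbb{R}^n\to\mathbb{R}\cup\{\infty\}$ is proper, lower semicontinuous, prox-bounded ($g+\frac{1}{2\gamma}\|\cdot\|^2$ bounded below for some $\gamma>0$; $\gamma_g\in(0,\infty]$ denotes the supremum of such $\gamma$), and continuous relative to $\operatorname{dom} g$ (whenever $\operatorname{dom} g\ni x^k\to x$, $g(x^k)\to g(x)$); $c:\mathbb{R}^n\to\mathbb{R}^m$ has locally Lipschitz continuous Jacobian. $q=f+g$, $\inf\{q(x): c(x)\le0\}\in\mathbb{R}$, $D=\{x: c(x)<0\}$, $F=\operatorname{dom} q\cap D\neq\emptyset$. The barrier $b:\mathbb{R}\to[0,\infty]$ has $\operatorname{dom} b=(-\infty,0)$, is twice continuously differentiable with $b'>0$ there, and $b(t)\to\infty$ as $t\to0^-$. For $\mu>0$: $f_\mu(z)=f(z)+\mu\sum_{i=1}^m b(c_i(z))$ ($=\infty$ outside $D$), $q_\mu=f_\mu+g$. $\hat\partial$ denotes the regular (Fréchet) subdifferential. $\operatorname{prox}_{\gamma g}(x)=\operatorname{argmin}_w\{g(w)+\frac{1}{2\gamma}\|w-x\|^2\}$,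 and $T_{\mu,\gamma}(z)=\operatorname{prox}_{\gamma g}(z-\gamma\nabla f_\mu(z))$ for $z\in D$. Algorithm IP-FB$(z^0,\mu,\varepsilon)$: inputs $z^0\in F$, $\mu>0$, $\varepsilon>0$; parameters $\gamma_0\in(0,\gamma_g)$, $\alpha,\beta\in(0,1)$. Set $j=0$ and start at step 2. Step 1 (only for $j\geq1$): set $\gamma_j\gets\gamma_{j-1}$ and $z^j\gets\bar z^{j-1}$. Step 2: compute some $\bar z^j\in T_{\mu,\gamma_j}(z^j)$. Step 3: if not all of the following hold: (a) $c(\bar z^j)<0$, (b) $q_\mu(\bar z^j)\leq q_\mu(z^j)-\frac{1-\alpha}{2\gamma_j}\|\bar z^j-z^j\|^2$, (c) $\|\nabla f_\mu(\bar z^j)-\nabla f_\mu(z^j)\|\leq\frac{\alpha}{\gamma_j}\|\bar z^j-z^j\|$, then set $\gamma_j\gets\beta\gamma_j$ and go back to Step 2. Step 4: if $\|\frac{1}{\gamma_j}(z^j-\bar z^j)-\nabla f_\mu(z^j)+\nabla f_\mu(\bar z^j)\|\leq\varepsilon$, return $\bar z^j$. Step 5: set $j\gets j+1$ and go to Step 1. *)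

theory Defs
  imports "HOL-Analysis.Analysis"
begin

definition locally_lipschitz :: "('a::metric_space \<Rightarrow> 'b::metric_space) \<Rightarrow> bool" where
  "locally_lipschitz F \<longleftrightarrow> (\<forall>x. \<exists>e>0. \<exists>L. L-lipschitz_on (ball x e) F)"

definition lsc :: "('a::metric_space \<Rightarrow> ereal) \<Rightarrow> bool" where
  "lsc g \<longleftrightarrow> (\<forall>x xs. xs \<longlonglongrightarrow> x \<longrightarrow> g x \<le> liminf (\<lambda>k. g (xs k)))"

definition edom :: "('a \<Rightarrow> ereal) \<Rightarrow> 'a set" where
  "edom g = {x. g x < \<infinity>}"

definition cont_rel_dom :: "('a::metric_space \<Rightarrow> ereal) \<Rightarrow> bool" where
  "cont_rel_dom g \<longleftrightarrow> (\<forall>x xs. (\<forall>k. xs k \<in> edom g) \<and> xs \<longlonglongrightarrow> x \<longrightarrow> (\<lambda>k. g (xs k)) \<longlonglongrightarrow> g x)"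

definition prox_bdd_set :: "('a::real_normed_vector \<Rightarrow> ereal) \<Rightarrow> real set" where
  "prox_bdd_set g = {\<gamma>. \<gamma> > 0 \<and> (\<exists>B::real. \<forall>x. ereal B \<le> g x + ereal (norm x ^ 2 / (2 * \<gamma>)))}"

definition prox_bounded :: "('a::real_normed_vector \<Rightarrow> ereal) \<Rightarrow> bool" where
  "prox_bounded g \<longleftrightarrow> prox_bdd_set g \<noteq> {}"

definition gamma_g :: "('a::real_normed_vector \<Rightarrow> ereal) \<Rightarrow> ereal" where
  "gamma_g g = Sup (ereal ` prox_bdd_set g)"

definition prox :: "('a::real_normed_vector \<Rightarrow> ereal) \<Rightarrow> real \<Rightarrow> 'a \<Rightarrow> 'a set" where
  "prox g \<gamma> x = {w. \<forall>u. g w + ereal (norm (w - x) ^ 2 / (2 * \<gamma>)) \<le> g u + ereal (norm (u - x) ^ 2 / (2 * \<gamma>))}"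

text \<open>Regular (Frechet) subdifferential:
  v is in it iff h z is finite and liminf_{w \<rightarrow> z, w \<noteq> z} (h w - h z - <v, w - z>) / |w - z| \<ge> 0,
  written out in epsilon-delta form.\<close>
definition frechet_subdiff :: "('a::real_inner \<Rightarrow> ereal) \<Rightarrow> 'a \<Rightarrow> 'a set" where
  "frechet_subdiff h z = {v. \<bar>h z\<bar> \<noteq> \<infinity> \<and>
     (\<forall>e>0. \<exists>\<delta>>0. \<forall>w. norm (w - z) < \<delta> \<longrightarrow>
        h z + ereal (inner v (w - z) - e * norm (w - z)) \<le> h w)}"

definition fmu :: "('a \<Rightarrow> real) \<Rightarrow> (nat \<Rightarrow> 'a \<Rightarrow> real) \<Rightarrow> nat \<Rightarrow> (real \<Rightarrow> real) \<Rightarrow> real \<Rightarrow> 'a \<Rightarrow> ereal" where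
  "fmu f c m b \<mu> z = (if \<forall>i<m. c i z < 0 then ereal (f z + \<mu> * (\<Sum>i<m. b (c i z))) else \<infinity>)"

text \<open>Gradient of f_mu on D (chain rule), given gradients df of f, dc i of c i, and db = b'.\<close>
definition grad_fmu :: "('a \<Rightarrow> 'a::real_vector) \<Rightarrow> (nat \<Rightarrow> 'a \<Rightarrow> real) \<Rightarrow> (nat \<Rightarrow> 'a \<Rightarrow> 'a) \<Rightarrow> nat \<Rightarrow> (real \<Rightarrow> real) \<Rightarrow> real \<Rightarrow> 'a \<Rightarrow> 'a" where
  "grad_fmu df c dc m db \<mu> z = df z + \<mu> *\<^sub>R (\<Sum>i<m. db (c i z) *\<^sub>R dc i z)"

definition qmu :: "('a \<Rightarrow> real) \<Rightarrow> ('a \<Rightarrow> ereal) \<Rightarrow> (nat \<Rightarrow> 'a \<Rightarrow> real) \<Rightarrow> nat \<Rightarrow> (real \<Rightarrow> real) \<Rightarrow> real \<Rightarrow> 'a \<Rightarrow> ereal" where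
  "qmu f g c m b \<mu> z = fmu f c m b \<mu> z + g z"

definition Tmu :: "('a \<Rightarrow> 'a::real_normed_vector) \<Rightarrow> ('a \<Rightarrow> ereal) \<Rightarrow> (nat \<Rightarrow> 'a \<Rightarrow> real) \<Rightarrow> (nat \<Rightarrow> 'a \<Rightarrow> 'a) \<Rightarrow> nat \<Rightarrow> (real \<Rightarrow> real) \<Rightarrow> real \<Rightarrow> real \<Rightarrow> 'a \<Rightarrow> 'a set" where
  "Tmu df g c dc m db \<mu> \<gamma> z = prox g \<gamma> (z - \<gamma> *\<^sub>R grad_fmu df c dc m db \<mu> z)"

text \<open>States: Cont gamma z = about to execute Step 2 with current stepsize gamma and iterate z;
  Ret z = the algorithm has returned z.\<close>
datatype 'a ipfb_state = Cont real 'a | Ret 'a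

definition ipfb_accept :: "('a \<Rightarrow> real) \<Rightarrow> ('a \<Rightarrow> 'a::real_normed_vector) \<Rightarrow> ('a \<Rightarrow> ereal) \<Rightarrow> (nat \<Rightarrow> 'a \<Rightarrow> real) \<Rightarrow> (nat \<Rightarrow> 'a \<Rightarrow> 'a) \<Rightarrow> nat \<Rightarrow> (real \<Rightarrow> real) \<Rightarrow> (real \<Rightarrow> real) \<Rightarrow> real \<Rightarrow> real \<Rightarrow> real \<Rightarrow> 'a \<Rightarrow> 'a \<Rightarrow> bool" where
  "ipfb_accept f df g c dc m b db \<mu> \<alpha> \<gamma> z zb \<longleftrightarrow>
     (\<forall>i<m. c i zb < 0) \<and>
     qmu f g c m b \<mu> zb \<le> qmu f g c m b \<mu> z - ereal ((1 - \<alpha>) / (2 * \<gamma>) * norm (zb - z) ^ 2) \<and>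
     norm (grad_fmu df c dc m db \<mu> zb - grad_fmu df c dc m db \<mu> z) \<le> \<alpha> / \<gamma> * norm (zb - z)"

definition ipfb_residual :: "('a \<Rightarrow> 'a::real_normed_vector) \<Rightarrow> (nat \<Rightarrow> 'a \<Rightarrow> real) \<Rightarrow> (nat \<Rightarrow> 'a \<Rightarrow> 'a) \<Rightarrow> nat \<Rightarrow> (real \<Rightarrow> real) \<Rightarrow> real \<Rightarrow> real \<Rightarrow> 'a \<Rightarrow> 'a \<Rightarrow> real" where
  "ipfb_residual df c dc m db \<mu> \<gamma> z zb =
     norm ((1 / \<gamma>) *\<^sub>R (z - zb) - grad_fmu df c dc m db \<mu> z + grad_fmu df c dc m db \<mu> zb)"

text \<open>One pass through Steps 2--5: pick some zb in T(z) (Step 2); on rejection shrink gamma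
  and redo Step 2 (Step 3); on acceptance either return zb (Step 4) or continue with
  z := zb and the same gamma (Steps 5, 1).\<close>
inductive ipfb_step :: "('a \<Rightarrow> real) \<Rightarrow> ('a \<Rightarrow> 'a::real_normed_vector) \<Rightarrow> ('a \<Rightarrow> ereal) \<Rightarrow> (nat \<Rightarrow> 'a \<Rightarrow> real) \<Rightarrow> (nat \<Rightarrow> 'a \<Rightarrow> 'a) \<Rightarrow> nat \<Rightarrow> (real \<Rightarrow> real) \<Rightarrow> (real \<Rightarrow> real) \<Rightarrow> real \<Rightarrow> real \<Rightarrow> real \<Rightarrow> real \<Rightarrow> 'a ipfb_state \<Rightarrow> 'a ipfb_state \<Rightarrow> bool"
  for f df g c dc m b db \<mu> \<epsilon> \<alpha> \<beta> where
  backtrack: "zb \<in> Tmu df g c dc m db \<mu> \<gamma> z \<Longrightarrow> \<not> ipfb_accept f df g c dc m b db \<mu> \<alpha> \<gamma> z zb \<Longrightarrow>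
     ipfb_step f df g c dc m b db \<mu> \<epsilon> \<alpha> \<beta> (Cont \<gamma> z) (Cont (\<beta> * \<gamma>) z)"
| return: "zb \<in> Tmu df g c dc m db \<mu> \<gamma> z \<Longrightarrow> ipfb_accept f df g c dc m b db \<mu> \<alpha> \<gamma> z zb \<Longrightarrow>
     ipfb_residual df c dc m db \<mu> \<gamma> z zb \<le> \<epsilon> \<Longrightarrow>
     ipfb_step f df g c dc m b db \<mu> \<epsilon> \<alpha> \<beta> (Cont \<gamma> z) (Ret zb)"
| continue: "zb \<in> Tmu df g c dc m db \<mu> \<gamma> z \<Longrightarrow> ipfb_accept f df g c dc m b db \<mu> \<alpha> \<gamma> z zb \<Longrightarrow>
     \<not> ipfb_residual df c dc m db \<mu> \<gamma> z zb \<le> \<epsilon> \<Longrightarrow>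
     ipfb_step f df g c dc m b db \<mu> \<epsilon> \<alpha> \<beta> (Cont \<gamma> z) (Cont \<gamma> zb)"

end

theory Submission
  imports Defs
begin

text \<open>
  Every accepted candidate passes the sufficient-decrease test, so all iterates lie in the sublevel
  set \<open>q\<^sub>\<mu> \<le> q\<^sub>\<mu> z0\<close>. A returned point is \<open>\<epsilon>\<close>-stationary because, by optimality of the
  proximal step and differentiability of \<open>f\<^sub>\<mu>\<close>, the residual of Step 4 is a regular subgradient
  of \<open>q\<^sub>\<mu>\<close> at that point. Proximal points exist for \<open>\<gamma> < \<gamma>\<^sub>g\<close> by lower semicontinuity and
  coercivity, so Step 2 can always be executed.

  Suppose the run were infinite. A step that neither backtracks nor returns is longer than
  \<open>\<epsilon>\<gamma>/(1 + \<alpha>)\<close>, so the sufficient-decrease test bounds its length by a constant times the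
  decrease of \<open>q\<^sub>\<mu>\<close>; since \<open>q\<^sub>\<mu>\<close> is bounded below, the iterates have finite length and converge.
  The barrier keeps the limit inside \<open>D\<close>, where the gradient of \<open>f\<^sub>\<mu>\<close> is locally Lipschitz and
  the forward-backward steps are uniformly short for small \<open>\<gamma>\<close>. Hence small stepsizes are accepted
  near the limit and \<open>\<gamma>\<close> stays bounded away from \<open>0\<close>, so that \<open>q\<^sub>\<mu> + \<gamma>\<close> decreases by a fixed
  amount in every step, contradicting the lower bound on \<open>q\<^sub>\<mu>\<close>.
\<close>

section \<open>Proximal points\<close>

lemma lsc_add_continuous:
  fixes g :: "'a::metric_space \<Rightarrow> ereal" and q :: "'a \<Rightarrow> real"
  assumes "lsc g" "continuous_on UNIV q"
  shows "lsc (\<lambda>x. g x + ereal (q x))"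
  unfolding lsc_def
proof (intro allI impI)
  fix x :: 'a and xs assume lim: "xs \<longlonglongrightarrow> x"
  have "(\<lambda>k. ereal (q (xs k))) \<longlonglongrightarrow> ereal (q x)"
    using assms(2) lim by (intro tendsto_ereal) (auto intro: continuous_on_tendsto_compose)
  hence "liminf (\<lambda>k. ereal (q (xs k)) + g (xs k)) = ereal (q x) + liminf (\<lambda>k. g (xs k))"
    by (rule ereal_liminf_lim_add) simp
  moreover have "ereal (q x) + g x \<le> ereal (q x) + liminf (\<lambda>k. g (xs k))"
    using assms(1) lim unfolding lsc_def by (blast intro: add_left_mono)
  ultimately show "g x + ereal (q x) \<le> liminf (\<lambda>k. g (xs k) + ereal (q (xs k)))"
    by (simp add: add.commute)
qed

lemma lsc_attains_min:
  fixes h :: "'a::heine_borel \<Rightarrow> ereal"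
  assumes lsc: "lsc h" and bdd: "bounded {w. h w \<le> h w0}"
  obtains l where "\<And>u. h l \<le> h u"
proof -
  define S where "S = {w. h w \<le> h w0}"
  have "w0 \<in> S" by (simp add: S_def)
  hence "h ` S \<noteq> {}" by blast
  then obtain v where v: "decseq v" "range v \<subseteq> h ` S" "Inf (h ` S) = (INF i. v i)"
    by (metis Inf_countable_INF)
  have "\<forall>n. \<exists>w. w \<in> S \<and> h w = v n" using v(2) by (metis imageE rangeI subsetD)
  then obtain u where u: "\<And>n. u n \<in> S" "\<And>n. h (u n) = v n" by metis
  have "bounded (range u)" using bdd u(1) by (auto simp: S_def intro: bounded_subset)
  then obtain l r where r: "strict_mono r" and lim: "(u \<circ> r) \<longlonglongrightarrow> l"
    using bounded_imp_convergent_subsequence by blast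
  have "(\<lambda>k. v (r k)) \<longlonglongrightarrow> Inf (h ` S)"
    using LIMSEQ_subseq_LIMSEQ[OF LIMSEQ_INF[OF v(1)] r] v(3) by (simp add: o_def)
  hence "liminf (\<lambda>k. h (u (r k))) = Inf (h ` S)"
    by (simp add: u(2) lim_imp_Liminf)
  moreover have "h l \<le> liminf (\<lambda>k. h ((u \<circ> r) k))" using lsc lim unfolding lsc_def by blast
  ultimately have l: "h l \<le> Inf (h ` S)" by (simp add: o_def)
  have "h l \<le> h w" for w
  proof (cases "w \<in> S")
    case True thus ?thesis using l by (meson INF_lower order_trans)
  next
    case False
    have "Inf (h ` S) \<le> h w0" by (rule INF_lower) (simp add: S_def)
    thus ?thesis using False l by (auto simp: S_def)
  qed
  thus thesis by (rule that)
qed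

lemma quadratic_gap_bound:
  fixes a X K \<gamma> \<gamma>' :: real
  assumes \<gamma>: "0 < \<gamma>" "\<gamma> < \<gamma>'" and a: "0 \<le> a" and X: "0 \<le> X"
    and gap: "a\<^sup>2 / (2*\<gamma>) - (a + X)\<^sup>2 / (2*\<gamma>') \<le> K"
  shows "a\<^sup>2 * ((\<gamma>' - \<gamma>) / (4*\<gamma>*\<gamma>')) \<le> K + (\<gamma>' + \<gamma>) / (\<gamma>' - \<gamma>) * X\<^sup>2 / (2*\<gamma>')"
proof -
  define s where "s = (\<gamma>' - \<gamma>) / (2*\<gamma>)"
  have s: "s > 0" using \<gamma> by (simp add: s_def)
  \<comment> \<open>\<open>s\<close> is chosen so that \<open>(1 + s)/\<gamma>'\<close> is the midpoint of \<open>1/\<gamma>'\<close> and \<open>1/\<gamma>\<close>\<close>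
  have "2*a*X \<le> s*a\<^sup>2 + X\<^sup>2/s"
  proof -
    have "0 \<le> (s*a - X)\<^sup>2 / s" using s by simp
    also have "\<dots> = s*a\<^sup>2 - 2*a*X + X\<^sup>2/s" using s by (simp add: field_simps power2_eq_square)
    finally show ?thesis by simp
  qed
  hence "(a + X)\<^sup>2 \<le> (1 + s)*a\<^sup>2 + (1 + 1/s)*X\<^sup>2" by (simp add: power2_eq_square algebra_simps)
  hence "(a + X)\<^sup>2 / (2*\<gamma>') \<le> ((1 + s)*a\<^sup>2 + (1 + 1/s)*X\<^sup>2) / (2*\<gamma>')"
    using \<gamma> by (simp add: divide_right_mono)
  moreover have "a\<^sup>2 / (2*\<gamma>) - (1 + s)*a\<^sup>2 / (2*\<gamma>') = a\<^sup>2 * ((\<gamma>' - \<gamma>) / (4*\<gamma>*\<gamma>'))"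
    using \<gamma> by (simp add: s_def field_simps)
  moreover have "1 + 1/s = (\<gamma>' + \<gamma>) / (\<gamma>' - \<gamma>)" using \<gamma> by (simp add: s_def field_simps)
  ultimately show ?thesis using gap by (simp add: add_divide_distrib)
qed

lemma quadratic_gap_bound_small:
  fixes a X K \<gamma> \<gamma>' :: real
  assumes \<gamma>: "0 < \<gamma>" "4*\<gamma> \<le> \<gamma>'" and a: "0 \<le> a" and X: "0 \<le> X"
    and gap: "a\<^sup>2 / (2*\<gamma>) - (a + X)\<^sup>2 / (2*\<gamma>') \<le> K"
  shows "a\<^sup>2 \<le> 4*\<gamma> * (K + X\<^sup>2 / \<gamma>')"
proof -
  have "(a + X)\<^sup>2 \<le> 2*a\<^sup>2 + 2*X\<^sup>2"
    using zero_le_power2[of "a - X"] by (simp add: power2_eq_square algebra_simps)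
  hence "(a + X)\<^sup>2 / (2*\<gamma>') \<le> a\<^sup>2/\<gamma>' + X\<^sup>2/\<gamma>'"
    using \<gamma> by (simp add: field_simps)
  moreover have "a\<^sup>2/\<gamma>' \<le> a\<^sup>2/(4*\<gamma>)" using \<gamma> by (simp add: frac_le)
  ultimately have "a\<^sup>2/(4*\<gamma>) \<le> K + X\<^sup>2/\<gamma>'" using gap by (simp add: field_simps)
  thus ?thesis using \<gamma> by (simp add: field_simps)
qed

lemma prox_bdd_gap:
  fixes g :: "'a::real_normed_vector \<Rightarrow> ereal"
  assumes B: "\<And>y. ereal B \<le> g y + ereal ((norm y)\<^sup>2 / (2*\<gamma>'))" and \<gamma>': "0 < \<gamma>'"
    and V: "g w + ereal ((norm (w - x))\<^sup>2 / (2*\<gamma>)) \<le> ereal V"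
  shows "(norm (w - x))\<^sup>2 / (2*\<gamma>) - (norm (w - x) + norm x)\<^sup>2 / (2*\<gamma>') \<le> V - B"
proof -
  have "g w \<noteq> -\<infinity>" using B[of w] by auto
  moreover have "g w \<noteq> \<infinity>" using V by auto
  ultimately obtain G where G: "g w = ereal G" by (cases "g w") auto
  have "norm w \<le> norm (w - x) + norm x" using norm_triangle_ineq[of "w - x" x] by simp
  hence "(norm w)\<^sup>2 / (2*\<gamma>') \<le> (norm (w - x) + norm x)\<^sup>2 / (2*\<gamma>')"
    using \<gamma>' by (intro divide_right_mono power_mono) auto
  moreover have "G + (norm (w - x))\<^sup>2 / (2*\<gamma>) \<le> V" using V by (simp add: G)
  moreover have "B \<le> G + (norm w)\<^sup>2 / (2*\<gamma>')" using B[of w] by (simp add: G)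
  ultimately show ?thesis by linarith
qed

lemma prox_nonempty:
  fixes g :: "'a::euclidean_space \<Rightarrow> ereal"
  assumes lsc: "lsc g" and w0: "g w0 \<noteq> \<infinity>"
    and \<gamma>': "\<gamma>' \<in> prox_bdd_set g" and \<gamma>: "0 < \<gamma>" "\<gamma> < \<gamma>'"
  shows "prox g \<gamma> x \<noteq> {}"
proof -
  obtain B where B: "\<And>y. ereal B \<le> g y + ereal ((norm y)\<^sup>2 / (2*\<gamma>'))"
    using \<gamma>' unfolding prox_bdd_set_def by blast
  define h where "h w = g w + ereal ((norm (w - x))\<^sup>2 / (2*\<gamma>))" for w
  have "lsc h"
    unfolding h_def using \<gamma> by (intro lsc_add_continuous lsc continuous_intros) auto
  have "g w0 \<noteq> -\<infinity>" using B[of w0] by auto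
  then obtain H where H: "h w0 = ereal H" using w0 by (cases "g w0") (auto simp: h_def)
  define K where "K = H - B + (\<gamma>' + \<gamma>) / (\<gamma>' - \<gamma>) * (norm x)\<^sup>2 / (2*\<gamma>')"
  define \<kappa> where "\<kappa> = (\<gamma>' - \<gamma>) / (4*\<gamma>*\<gamma>')"
  have \<kappa>: "\<kappa> > 0" using \<gamma> by (simp add: \<kappa>_def)
  have "{w. h w \<le> h w0} \<subseteq> cball x (sqrt (K / \<kappa>))"
  proof
    fix w assume "w \<in> {w. h w \<le> h w0}"
    hence "h w \<le> ereal H" by (simp add: H)
    hence "g w + ereal ((norm (w - x))\<^sup>2 / (2*\<gamma>)) \<le> ereal H" by (simp add: h_def)
    from prox_bdd_gap[OF B _ this] \<gamma>
    have "(norm (w - x))\<^sup>2 / (2*\<gamma>) - (norm (w - x) + norm x)\<^sup>2 / (2*\<gamma>') \<le> H - B" by simp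
    from quadratic_gap_bound[OF \<gamma> norm_ge_zero norm_ge_zero this]
    have "(norm (w - x))\<^sup>2 * \<kappa> \<le> K" by (simp add: K_def \<kappa>_def)
    hence "(norm (w - x))\<^sup>2 \<le> K / \<kappa>" using \<kappa> by (simp add: pos_le_divide_eq)
    thus "w \<in> cball x (sqrt (K / \<kappa>))" by (simp add: dist_norm norm_minus_commute real_le_rsqrt)
  qed
  hence "bounded {w. h w \<le> h w0}" by (rule bounded_subset[OF bounded_cball])
  then obtain l where "\<And>u. h l \<le> h u" using lsc_attains_min[OF \<open>lsc h\<close>] by blast
  hence "l \<in> prox g \<gamma> x" by (simp add: prox_def h_def)
  thus ?thesis by blast
qed

lemma prox_subgradient_ineq:
  fixes g :: "'a::real_inner \<Rightarrow> ereal"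
  assumes w: "w \<in> prox g \<gamma> x" and \<gamma>: "0 < \<gamma>"
  shows "g w + ereal (inner ((1/\<gamma>) *\<^sub>R (x - w)) (u - w) - (norm (u - w))\<^sup>2 / (2*\<gamma>)) \<le> g u"
proof -
  define C where "C = (norm (u - w))\<^sup>2 / (2*\<gamma>) - inner (x - w) (u - w) / \<gamma>"
  have "(norm (u - x))\<^sup>2 = (norm (u - w))\<^sup>2 - 2 * inner (x - w) (u - w) + (norm (w - x))\<^sup>2"
    unfolding power2_norm_eq_inner
    by (simp add: inner_diff_left inner_diff_right inner_commute algebra_simps)
  hence "(norm (u - x))\<^sup>2 / (2*\<gamma>) = C + (norm (w - x))\<^sup>2 / (2*\<gamma>)"
    using \<gamma> by (simp add: C_def field_simps)
  hence "g w + ereal ((norm (w - x))\<^sup>2 / (2*\<gamma>)) \<le> (g u + ereal C) + ereal ((norm (w - x))\<^sup>2 / (2*\<gamma>))"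
    using w unfolding prox_def by (metis (mono_tags, lifting) mem_Collect_eq add.assoc plus_ereal.simps(1))
  hence "g w \<le> g u + ereal C" by (simp add: ereal_add_le_add_iff2)
  thus ?thesis by (cases "g w"; cases "g u") (auto simp: C_def)
qed

lemma prox_grad_step_ineq:
  fixes g :: "'a::real_inner \<Rightarrow> ereal"
  assumes w: "w \<in> prox g \<gamma> (z - \<gamma> *\<^sub>R v)" and \<gamma>: "0 < \<gamma>"
  shows "g w + ereal ((norm (w - z))\<^sup>2 / (2*\<gamma>) + inner v (w - z)) \<le> g z"
proof -
  have "(1/\<gamma>) *\<^sub>R (z - \<gamma> *\<^sub>R v - w) = (1/\<gamma>) *\<^sub>R (z - w) - v"
    using \<gamma> by (simp add: algebra_simps)
  moreover have "inner ((1/\<gamma>) *\<^sub>R (z - w) - v) (z - w) = (norm (w - z))\<^sup>2 / \<gamma> + inner v (w - z)"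
    by (simp add: inner_diff_left inner_diff_right power2_norm_eq_inner inner_commute diff_divide_distrib)
  ultimately have "inner ((1/\<gamma>) *\<^sub>R (z - \<gamma> *\<^sub>R v - w)) (z - w) - (norm (z - w))\<^sup>2 / (2*\<gamma>)
      = (norm (w - z))\<^sup>2 / (2*\<gamma>) + inner v (w - z)"
    by (simp add: norm_minus_commute field_simps)
  thus ?thesis using prox_subgradient_ineq[OF w \<gamma>, of z] by simp
qed

lemma prox_dist_bound:
  fixes g :: "'a::real_inner \<Rightarrow> ereal"
  assumes w: "w \<in> prox g \<gamma> x" and \<gamma>: "0 < \<gamma>" "4*\<gamma> \<le> \<gamma>'"
    and B: "\<And>y. ereal B \<le> g y + ereal ((norm y)\<^sup>2 / (2*\<gamma>'))"
    and V: "g u + ereal ((norm (u - x))\<^sup>2 / (2*\<gamma>)) \<le> ereal V"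
  shows "(norm (w - x))\<^sup>2 \<le> 4*\<gamma> * (V - B + (norm x)\<^sup>2 / \<gamma>')"
proof -
  have "g w + ereal ((norm (w - x))\<^sup>2 / (2*\<gamma>)) \<le> ereal V"
    using w V by (simp add: prox_def) (blast intro: order_trans)
  from prox_bdd_gap[OF B _ this] \<gamma>
  have "(norm (w - x))\<^sup>2 / (2*\<gamma>) - (norm (w - x) + norm x)\<^sup>2 / (2*\<gamma>') \<le> V - B" by simp
  thus ?thesis by (rule quadratic_gap_bound_small[OF \<gamma> norm_ge_zero norm_ge_zero])
qed

lemma prox_grad_step_bound:
  fixes g :: "'a::real_inner \<Rightarrow> ereal"
  assumes w: "w \<in> prox g \<gamma> (z - \<gamma> *\<^sub>R v)" and \<gamma>: "0 < \<gamma>" "\<gamma> \<le> 1" "4*\<gamma> \<le> \<gamma>'"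
    and B: "\<And>y. ereal B \<le> g y + ereal ((norm y)\<^sup>2 / (2*\<gamma>'))"
    and gz: "g z \<le> ereal G" and v: "norm v \<le> A" and z: "norm z \<le> R"
  shows "norm (w - z) \<le> sqrt (4*\<gamma> * (G + A\<^sup>2 / 2 - B + (R + A)\<^sup>2 / \<gamma>')) + \<gamma> * A"
proof -
  define x where "x = z - \<gamma> *\<^sub>R v"
  have \<gamma>v: "\<gamma> * norm v \<le> A" using \<gamma> v mult_left_le_one_le[of "norm v" \<gamma>] by simp
  have "(norm (z - x))\<^sup>2 / (2*\<gamma>) = (\<gamma> * norm v) * norm v / 2"
    using \<gamma> by (simp add: x_def power2_eq_square)
  also have "\<dots> \<le> A * A / 2"
    using \<gamma>v v by (intro divide_right_mono mult_mono) (auto intro: order_trans[OF norm_ge_zero])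
  finally have "(norm (z - x))\<^sup>2 / (2*\<gamma>) \<le> A\<^sup>2 / 2" by (simp add: power2_eq_square)
  hence "g z + ereal ((norm (z - x))\<^sup>2 / (2*\<gamma>)) \<le> ereal G + ereal (A\<^sup>2 / 2)"
    using gz by (intro add_mono) simp_all
  hence "g z + ereal ((norm (z - x))\<^sup>2 / (2*\<gamma>)) \<le> ereal (G + A\<^sup>2 / 2)" by simp
  from prox_dist_bound[OF w[folded x_def] \<gamma>(1,3) B this]
  have "(norm (w - x))\<^sup>2 \<le> 4*\<gamma> * (G + A\<^sup>2 / 2 - B + (norm x)\<^sup>2 / \<gamma>')" .
  also have "\<dots> \<le> 4*\<gamma> * (G + A\<^sup>2 / 2 - B + (R + A)\<^sup>2 / \<gamma>')"
  proof -
    have "norm x \<le> R + A" using norm_triangle_ineq4[of z "\<gamma> *\<^sub>R v"] z \<gamma>v \<gamma> by (simp add: x_def)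
    hence "(norm x)\<^sup>2 / \<gamma>' \<le> (R + A)\<^sup>2 / \<gamma>'" using \<gamma> by (intro divide_right_mono power_mono) auto
    thus ?thesis using \<gamma> by simp
  qed
  finally have "norm (w - x) \<le> sqrt (4*\<gamma> * (G + A\<^sup>2 / 2 - B + (R + A)\<^sup>2 / \<gamma>'))"
    by (rule real_le_rsqrt)
  moreover have "norm (w - z) \<le> norm (w - x) + \<gamma> * norm v"
    using norm_triangle_ineq[of "w - x" "- \<gamma> *\<^sub>R v"] \<gamma> by (simp add: x_def algebra_simps)
  moreover have "\<gamma> * norm v \<le> \<gamma> * A" using \<gamma> v by simp
  ultimately show ?thesis by linarith
qed

section \<open>Lipschitz continuous gradients\<close>

lemma descent_lemma:
  fixes \<phi> :: "'a::real_inner \<Rightarrow> real"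
  assumes S: "convex S" and zS: "z \<in> S" and wS: "w \<in> S"
    and der: "\<And>y. y \<in> S \<Longrightarrow> (\<phi> has_derivative (\<lambda>h. inner (G y) h)) (at y)"
    and lip: "L-lipschitz_on S G"
  shows "\<phi> w \<le> \<phi> z + inner (G z) (w - z) + L / 2 * (norm (w - z))\<^sup>2"
proof -
  define d where "d = w - z"
  define p where "p t = z + t *\<^sub>R d" for t :: real
  \<comment> \<open>\<open>h\<close> is nonincreasing on \<open>[0, 1]\<close> because its derivative is
      \<open>\<langle>G (p t) - G z, d\<rangle> - L t \<parallel>d\<parallel>\<^sup>2 \<le> 0\<close>\<close>
  define h where "h t = \<phi> (p t) - t * inner (G z) d - L / 2 * t\<^sup>2 * (norm d)\<^sup>2" for t
  have pS: "p t \<in> S" if "0 \<le> t" "t \<le> 1" for t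
  proof -
    have "p t = (1 - t) *\<^sub>R z + t *\<^sub>R w" by (simp add: p_def d_def algebra_simps)
    thus ?thesis using S zS wS that by (simp add: convex_alt)
  qed
  have "h 1 \<le> h 0"
  proof (rule DERIV_nonpos_imp_nonincreasing[of 0 1 h])
    fix t :: real assume t: "0 \<le> t" "t \<le> 1"
    have "(p has_derivative (\<lambda>s. s *\<^sub>R d)) (at t)"
      unfolding p_def by (auto intro!: derivative_eq_intros)
    from has_derivative_compose[OF this der[OF pS[OF t]]]
    have "((\<lambda>t. \<phi> (p t)) has_derivative (\<lambda>s. s * inner (G (p t)) d)) (at t)"
      by (simp add: o_def)
    hence "DERIV h t :> inner (G (p t)) d - inner (G z) d - L * t * (norm d)\<^sup>2"
      unfolding h_def has_field_derivative_def
      by (auto intro!: derivative_eq_intros simp: fun_eq_iff algebra_simps)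
    moreover have "inner (G (p t)) d - inner (G z) d \<le> L * t * (norm d)\<^sup>2"
    proof -
      have "inner (G (p t)) d - inner (G z) d \<le> norm (G (p t) - G z) * norm d"
        by (metis inner_diff_left norm_cauchy_schwarz)
      also have "\<dots> \<le> L * norm (p t - z) * norm d"
        by (rule mult_right_mono[OF lipschitz_on_normD[OF lip pS[OF t] zS]]) simp
      also have "\<dots> = L * t * (norm d)\<^sup>2" using t by (simp add: p_def power2_eq_square)
      finally show ?thesis .
    qed
    ultimately show "\<exists>y. DERIV h t :> y \<and> y \<le> 0" by auto
  qed simp
  thus ?thesis by (simp add: h_def p_def d_def algebra_simps)
qed

definition locally_lipschitz_at :: "'a::metric_space \<Rightarrow> ('a \<Rightarrow> 'b::metric_space) \<Rightarrow> bool" where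
  "locally_lipschitz_at x F \<longleftrightarrow> (\<exists>e>0. \<exists>L. L-lipschitz_on (ball x e) F)"

lemma locally_lipschitz_iff_at: "locally_lipschitz F \<longleftrightarrow> (\<forall>x. locally_lipschitz_at x F)"
  by (simp add: locally_lipschitz_def locally_lipschitz_at_def)

lemma lipschitz_on_ball_norm_le:
  fixes F :: "'a::metric_space \<Rightarrow> 'b::real_normed_vector"
  assumes "L-lipschitz_on (ball x e) F" "y \<in> ball x e"
  shows "norm (F y) \<le> norm (F x) + L * e"
proof -
  have "x \<in> ball x e" using assms(2) by (simp add: le_less_trans[OF zero_le_dist])
  hence "dist (F y) (F x) \<le> L * dist y x" using lipschitz_onD[OF assms(1) assms(2)] by blast
  also have "\<dots> \<le> L * e" using assms(2) lipschitz_on_nonneg[OF assms(1)]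
    by (intro mult_left_mono) (auto simp: dist_commute)
  finally show ?thesis using norm_triangle_ineq2[of "F y" "F x"] by (simp add: dist_norm)
qed

lemma locally_lipschitz_at_add:
  fixes F G :: "'a::metric_space \<Rightarrow> 'b::real_normed_vector"
  assumes "locally_lipschitz_at x F" "locally_lipschitz_at x G"
  shows "locally_lipschitz_at x (\<lambda>y. F y + G y)"
proof -
  obtain e1 L1 where "e1 > 0" "L1-lipschitz_on (ball x e1) F"
    using assms(1) by (auto simp: locally_lipschitz_at_def)
  moreover obtain e2 L2 where "e2 > 0" "L2-lipschitz_on (ball x e2) G"
    using assms(2) by (auto simp: locally_lipschitz_at_def)
  ultimately have "(L1 + L2)-lipschitz_on (ball x (min e1 e2)) (\<lambda>y. F y + G y)"
    by (intro lipschitz_on_add) (auto elim: lipschitz_on_subset)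
  thus ?thesis using \<open>e1 > 0\<close> \<open>e2 > 0\<close> unfolding locally_lipschitz_at_def
    by (intro exI[of _ "min e1 e2"]) auto
qed

lemma locally_lipschitz_at_sum:
  fixes F :: "'i \<Rightarrow> 'a::metric_space \<Rightarrow> 'b::real_normed_vector"
  assumes "\<And>i. i \<in> I \<Longrightarrow> locally_lipschitz_at x (F i)"
  shows "locally_lipschitz_at x (\<lambda>y. \<Sum>i\<in>I. F i y)"
proof (cases "finite I")
  case True
  thus ?thesis using assms
  proof (induction I rule: finite_induct)
    case empty thus ?case
      unfolding locally_lipschitz_at_def by (intro exI[of _ 1]) (auto intro: lipschitz_on_constant)
  next
    case (insert i I) thus ?case by (simp add: locally_lipschitz_at_add)
  qed
next
  case False thus ?thesis
    unfolding locally_lipschitz_at_def by (intro exI[of _ 1]) (auto intro: lipschitz_on_constant)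
qed

lemma locally_lipschitz_at_scaleR:
  fixes F :: "'a::metric_space \<Rightarrow> 'b::real_normed_vector"
  assumes "locally_lipschitz_at x F"
  shows "locally_lipschitz_at x (\<lambda>y. a *\<^sub>R F y)"
  using assms lipschitz_on_cmult unfolding locally_lipschitz_at_def by blast

lemma locally_lipschitz_at_scaleR_fun:
  fixes u :: "'a::metric_space \<Rightarrow> real" and v :: "'a \<Rightarrow> 'b::real_normed_vector"
  assumes "locally_lipschitz_at x u" "locally_lipschitz_at x v"
  shows "locally_lipschitz_at x (\<lambda>y. u y *\<^sub>R v y)"
proof -
  obtain e1 L1 where e1: "e1 > 0" "L1-lipschitz_on (ball x e1) u"
    using assms(1) by (auto simp: locally_lipschitz_at_def)
  obtain e2 L2 where e2: "e2 > 0" "L2-lipschitz_on (ball x e2) v"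
    using assms(2) by (auto simp: locally_lipschitz_at_def)
  define e where "e = min e1 e2"
  have lu: "L1-lipschitz_on (ball x e) u" and lv: "L2-lipschitz_on (ball x e) v"
    using e1 e2 by (auto simp: e_def elim: lipschitz_on_subset)
  have L: "L1 \<ge> 0" "L2 \<ge> 0" using lipschitz_on_nonneg lu lv by blast+
  define Mu where "Mu = \<bar>u x\<bar> + L1 * e"
  define Mv where "Mv = norm (v x) + L2 * e"
  have M: "Mu \<ge> 0" "Mv \<ge> 0" using L e1 e2 by (simp_all add: Mu_def Mv_def e_def)
  have "(L1 * Mv + Mu * L2)-lipschitz_on (ball x e) (\<lambda>y. u y *\<^sub>R v y)"
  proof (rule lipschitz_onI)
    fix y y' assume y: "y \<in> ball x e" and y': "y' \<in> ball x e"
    have "u y *\<^sub>R v y - u y' *\<^sub>R v y' = (u y - u y') *\<^sub>R v y + u y' *\<^sub>R (v y - v y')"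
      by (simp add: algebra_simps)
    hence "dist (u y *\<^sub>R v y) (u y' *\<^sub>R v y') \<le> \<bar>u y - u y'\<bar> * norm (v y) + \<bar>u y'\<bar> * norm (v y - v y')"
      by (metis dist_norm norm_scaleR norm_triangle_ineq)
    also have "\<dots> \<le> (L1 * dist y y') * Mv + Mu * (L2 * dist y y')"
    proof (intro add_mono mult_mono)
      show "\<bar>u y - u y'\<bar> \<le> L1 * dist y y'"
        using lipschitz_onD[OF lu y y'] by (simp add: dist_real_def)
      show "norm (v y - v y') \<le> L2 * dist y y'"
        using lipschitz_onD[OF lv y y'] by (simp add: dist_norm)
      show "norm (v y) \<le> Mv" using lipschitz_on_ball_norm_le[OF lv y] by (simp add: Mv_def)
      show "\<bar>u y'\<bar> \<le> Mu" using lipschitz_on_ball_norm_le[OF lu y'] by (simp add: Mu_def)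
    qed (use L M in auto)
    finally show "dist (u y *\<^sub>R v y) (u y' *\<^sub>R v y') \<le> (L1 * Mv + Mu * L2) * dist y y'"
      by (simp add: algebra_simps)
  qed (use L M in simp)
  thus ?thesis unfolding locally_lipschitz_at_def using e1 e2 by (intro exI[of _ e]) (auto simp: e_def)
qed

lemma locally_lipschitz_at_compose:
  fixes F :: "'a::metric_space \<Rightarrow> 'b::metric_space" and H :: "'b \<Rightarrow> 'c::metric_space"
  assumes "locally_lipschitz_at x F" "locally_lipschitz_at (F x) H"
  shows "locally_lipschitz_at x (\<lambda>y. H (F y))"
proof -
  obtain e1 C where e1: "e1 > 0" "C-lipschitz_on (ball x e1) F"
    using assms(1) by (auto simp: locally_lipschitz_at_def)
  obtain d D where d: "d > 0" "D-lipschitz_on (ball (F x) d) H"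
    using assms(2) by (auto simp: locally_lipschitz_at_def)
  have C: "C \<ge> 0" using lipschitz_on_nonneg[OF e1(2)] .
  define e where "e = min e1 (d / (C + 1))"
  have e: "e > 0" using e1 d C by (simp add: e_def)
  have lF: "C-lipschitz_on (ball x e) F" using e1(2) by (rule lipschitz_on_subset) (auto simp: e_def)
  have "F ` ball x e \<subseteq> ball (F x) d"
  proof clarify
    fix y assume y: "y \<in> ball x e"
    have "dist (F x) (F y) \<le> C * dist x y" using lipschitz_onD[OF lF _ y] e by simp
    also have "\<dots> \<le> C * (d / (C + 1))" using y C by (intro mult_left_mono) (auto simp: e_def)
    also have "\<dots> < d" using C d by (simp add: field_simps)
    finally show "F y \<in> ball (F x) d" by simp
  qed
  hence "(D * C)-lipschitz_on (ball x e) (\<lambda>y. H (F y))"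
    by (intro lipschitz_on_compose2[OF lF lipschitz_on_subset[OF d(2)]])
  thus ?thesis unfolding locally_lipschitz_at_def using e by blast
qed

lemma locally_lipschitz_at_of_gradient:
  fixes F :: "'a::euclidean_space \<Rightarrow> real"
  assumes der: "\<And>y. (F has_derivative (\<lambda>h. inner (dF y) h)) (at y)"
    and dF: "locally_lipschitz_at x dF"
  shows "locally_lipschitz_at x F"
proof -
  obtain e L where e: "e > 0" "L-lipschitz_on (ball x e) dF"
    using dF by (auto simp: locally_lipschitz_at_def)
  have "(norm (dF x) + L * e)-lipschitz_on (ball x e) F"
  proof (rule bounded_derivative_imp_lipschitz[OF _ convex_ball])
    fix y assume y: "y \<in> ball x e"
    show "(F has_derivative (\<lambda>h. inner (dF y) h)) (at y within ball x e)"
      using der has_derivative_at_withinI by blast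
    have "onorm (\<lambda>h. inner (dF y) h) \<le> norm (dF y)"
      by (rule onorm_bound) (simp_all add: Cauchy_Schwarz_ineq2)
    also have "\<dots> \<le> norm (dF x) + L * e" by (rule lipschitz_on_ball_norm_le[OF e(2) y])
    finally show "onorm (\<lambda>h. inner (dF y) h) \<le> norm (dF x) + L * e" .
  next
    show "0 \<le> norm (dF x) + L * e" using e lipschitz_on_nonneg[OF e(2)] by simp
  qed
  thus ?thesis unfolding locally_lipschitz_at_def using e by blast
qed

lemma locally_lipschitz_at_of_continuous_deriv:
  fixes F F' :: "real \<Rightarrow> real"
  assumes S: "open S" "t \<in> S"
    and der: "\<And>s. s \<in> S \<Longrightarrow> (F has_real_derivative F' s) (at s)"
    and cont: "continuous_on S F'"
  shows "locally_lipschitz_at t F"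
proof -
  obtain d where d: "d > 0" "cball t d \<subseteq> S" using S open_contains_cball by blast
  have "compact (F' ` cball t d)"
    by (rule compact_continuous_image[OF continuous_on_subset[OF cont d(2)] compact_cball])
  then obtain M where M: "M > 0" "\<And>s. s \<in> cball t d \<Longrightarrow> \<bar>F' s\<bar> \<le> M"
    by (metis compact_imp_bounded bounded_pos image_eqI real_norm_def)
  have "M-lipschitz_on (ball t d) F"
  proof (rule bounded_derivative_imp_lipschitz[OF _ convex_ball])
    fix s assume s: "s \<in> ball t d"
    hence "s \<in> S" using d(2) by auto
    thus "(F has_derivative (\<lambda>h. F' s * h)) (at s within ball t d)"
      using der has_derivative_at_withinI has_field_derivative_imp_has_derivative by blast
    have "onorm (\<lambda>h. F' s * h) \<le> \<bar>F' s\<bar>" by (rule onorm_bound) (simp_all add: abs_mult)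
    also have "\<dots> \<le> M" using M(2) s by auto
    finally show "onorm (\<lambda>h. F' s * h) \<le> M" .
  qed (use M in simp)
  thus ?thesis unfolding locally_lipschitz_at_def using d by blast
qed

section \<open>The barrier problem\<close>

locale barrier_problem =
  fixes f :: "'a::euclidean_space \<Rightarrow> real" and df :: "'a \<Rightarrow> 'a"
    and g :: "'a \<Rightarrow> ereal"
    and m :: nat and c :: "nat \<Rightarrow> 'a \<Rightarrow> real" and dc :: "nat \<Rightarrow> 'a \<Rightarrow> 'a"
    and b db d2b :: "real \<Rightarrow> real"
    and \<mu> :: real
  assumes f_grad: "\<And>x. (f has_derivative (\<lambda>h. inner (df x) h)) (at x)"
    and f_lip: "locally_lipschitz df"
    and g_nonneginf: "\<And>x. g x \<noteq> -\<infinity>"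
    and g_proper: "\<exists>x. g x \<noteq> \<infinity>"
    and g_lsc: "lsc g"
    and g_proxbdd: "prox_bounded g"
    and c_grad: "\<And>i x. i < m \<Longrightarrow> (c i has_derivative (\<lambda>h. inner (dc i x) h)) (at x)"
    and c_lip: "\<And>i. i < m \<Longrightarrow> locally_lipschitz (dc i)"
    and inf_finite: "\<bar>(INF x\<in>{x. \<forall>i<m. c i x \<le> 0}. ereal (f x) + g x)\<bar> \<noteq> \<infinity>"
    and b_nonneg: "\<And>t. t < 0 \<Longrightarrow> b t \<ge> 0"
    and b_deriv: "\<And>t. t < 0 \<Longrightarrow> (b has_real_derivative db t) (at t)"
    and db_deriv: "\<And>t. t < 0 \<Longrightarrow> (db has_real_derivative d2b t) (at t)"
    and d2b_cont: "continuous_on {..<0} d2b"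
    and b_blowup: "filterlim b at_top (at_left 0)"
    and mu_pos: "\<mu> > 0"
begin

abbreviation "q\<^sub>\<mu> \<equiv> qmu f g c m b \<mu>"
abbreviation "grad\<^sub>\<mu> \<equiv> grad_fmu df c dc m db \<mu>"
abbreviation "T \<equiv> Tmu df g c dc m db \<mu>"
abbreviation "accept \<equiv> ipfb_accept f df g c dc m b db \<mu>"

definition D :: "'a set" where
  "D = {x. \<forall>i<m. c i x < 0}"

definition fmu_real :: "'a \<Rightarrow> real" where
  "fmu_real z = f z + \<mu> * (\<Sum>i<m. b (c i z))"

definition q_inf :: real where
  "q_inf = real_of_ereal (INF x\<in>{x. \<forall>i<m. c i x \<le> 0}. ereal (f x) + g x)"

definition qval :: "'a \<Rightarrow> real" where
  "qval z = real_of_ereal (q\<^sub>\<mu> z)"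

lemma g_real: "g z \<noteq> \<infinity> \<Longrightarrow> g z = ereal (real_of_ereal (g z))"
  using g_nonneginf[of z] by (cases "g z") auto

lemma qmu_eq: "z \<in> D \<Longrightarrow> q\<^sub>\<mu> z = ereal (fmu_real z) + g z"
  by (simp add: qmu_def fmu_def D_def fmu_real_def)

lemma qmu_outside_D: "z \<notin> D \<Longrightarrow> q\<^sub>\<mu> z = \<infinity>"
  using g_nonneginf[of z] by (auto simp: qmu_def fmu_def D_def)

lemma qmu_finiteD:
  assumes "q\<^sub>\<mu> z \<noteq> \<infinity>"
  shows "z \<in> D" and "g z \<noteq> \<infinity>"
proof -
  show "z \<in> D" using assms qmu_outside_D by blast
  thus "g z \<noteq> \<infinity>" using assms by (auto simp: qmu_eq)
qed

lemma barrier_nonneg: "z \<in> D \<Longrightarrow> 0 \<le> (\<Sum>i<m. b (c i z))"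
  by (auto simp: D_def intro!: sum_nonneg b_nonneg)

lemma f_le_fmu_real: "z \<in> D \<Longrightarrow> f z \<le> fmu_real z"
  using barrier_nonneg mu_pos by (simp add: fmu_real_def)

lemma qmu_ge_q_inf:
  assumes z: "z \<in> D"
  shows "ereal (q_inf + \<mu> * (\<Sum>i<m. b (c i z))) \<le> q\<^sub>\<mu> z"
proof -
  have "ereal q_inf = (INF x\<in>{x. \<forall>i<m. c i x \<le> 0}. ereal (f x) + g x)"
    using inf_finite by (simp add: q_inf_def ereal_real')
  also have "\<dots> \<le> ereal (f z) + g z"
    using z by (intro INF_lower) (auto simp: D_def less_imp_le)
  finally have "ereal q_inf \<le> ereal (f z) + g z" .
  from add_right_mono[OF this, of "ereal (\<mu> * (\<Sum>i<m. b (c i z)))"]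
  have "ereal (q_inf + \<mu> * (\<Sum>i<m. b (c i z))) \<le> ereal (f z) + g z + ereal (\<mu> * (\<Sum>i<m. b (c i z)))"
    by simp
  also have "\<dots> = q\<^sub>\<mu> z"
    by (simp add: qmu_eq[OF z] fmu_real_def ac_simps)
  finally show ?thesis .
qed

lemma qmu_finite_eq:
  assumes "q\<^sub>\<mu> z \<noteq> \<infinity>"
  shows "q\<^sub>\<mu> z = ereal (qval z)"
proof -
  obtain G where "g z = ereal G" using g_real qmu_finiteD(2)[OF assms] by blast
  thus ?thesis using qmu_finiteD(1)[OF assms] by (simp add: qmu_eq qval_def)
qed

lemma q_inf_le_qval:
  assumes "q\<^sub>\<mu> z \<noteq> \<infinity>"
  shows "q_inf \<le> qval z"
proof -
  have z: "z \<in> D" using qmu_finiteD[OF assms] by simp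
  have "q_inf + \<mu> * (\<Sum>i<m. b (c i z)) \<le> qval z"
    using qmu_ge_q_inf[OF z] by (simp add: qmu_finite_eq[OF assms])
  thus ?thesis using barrier_nonneg[OF z] mu_pos by (smt (verit) mult_nonneg_nonneg)
qed

lemma D_open: "open D"
proof -
  have "D = (\<Inter>i<m. {x. c i x < 0})" by (auto simp: D_def)
  moreover have "continuous_on UNIV (c i)" if "i < m" for i
    using c_grad[OF that] by (meson continuous_at_imp_continuous_on has_derivative_continuous)
  ultimately show ?thesis by (auto intro!: open_INT open_Collect_less continuous_intros)
qed

lemma fmu_real_has_derivative:
  assumes z: "z \<in> D"
  shows "(fmu_real has_derivative (\<lambda>h. inner (grad\<^sub>\<mu> z) h)) (at z)"
proof -
  have "((\<lambda>y. b (c i y)) has_derivative (\<lambda>h. db (c i z) * inner (dc i z) h)) (at z)" if i: "i < m" for i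
  proof -
    have "(b has_derivative (\<lambda>t. db (c i z) * t)) (at (c i z))"
      using z i b_deriv[of "c i z"] by (simp add: D_def has_field_derivative_imp_has_derivative)
    from has_derivative_compose[OF c_grad[OF i] this] show ?thesis by simp
  qed
  hence "(fmu_real has_derivative
      (\<lambda>h. inner (df z) h + \<mu> * (\<Sum>i<m. db (c i z) * inner (dc i z) h))) (at z)"
    unfolding fmu_real_def by (intro has_derivative_add f_grad has_derivative_mult_right has_derivative_sum) simp
  thus ?thesis
    by (rule has_derivative_eq_rhs) (simp add: fun_eq_iff grad_fmu_def inner_add_left inner_sum_left)
qed

lemma grad_locally_lipschitz_at:
  assumes z: "z \<in> D"
  shows "locally_lipschitz_at z grad\<^sub>\<mu>"
proof -
  have "locally_lipschitz_at z (\<lambda>y. db (c i y) *\<^sub>R dc i y)" if i: "i < m" for i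
  proof (rule locally_lipschitz_at_scaleR_fun)
    have "locally_lipschitz_at (c i z) db"
      using z i db_deriv d2b_cont
      by (intro locally_lipschitz_at_of_continuous_deriv[of "{..<0}"]) (auto simp: D_def)
    moreover have "locally_lipschitz_at z (c i)"
      using c_grad[OF i] c_lip[OF i] by (intro locally_lipschitz_at_of_gradient) (auto simp: locally_lipschitz_iff_at)
    ultimately show "locally_lipschitz_at z (\<lambda>y. db (c i y))"
      by (rule locally_lipschitz_at_compose[rotated])
    show "locally_lipschitz_at z (dc i)" using c_lip[OF i] by (simp add: locally_lipschitz_iff_at)
  qed
  hence "locally_lipschitz_at z (\<lambda>y. df y + \<mu> *\<^sub>R (\<Sum>i<m. db (c i y) *\<^sub>R dc i y))"
    using f_lip
    by (intro locally_lipschitz_at_add locally_lipschitz_at_scaleR locally_lipschitz_at_sum)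
      (auto simp: locally_lipschitz_iff_at)
  thus ?thesis by (simp add: grad_fmu_def[abs_def])
qed

lemma grad_lipschitz_on_ball:
  assumes z: "z \<in> D"
  obtains e L where "e > 0" "ball z e \<subseteq> D" "L-lipschitz_on (ball z e) grad\<^sub>\<mu>"
proof -
  obtain e1 L where e1: "e1 > 0" "L-lipschitz_on (ball z e1) grad\<^sub>\<mu>"
    using grad_locally_lipschitz_at[OF z] by (auto simp: locally_lipschitz_at_def)
  obtain e2 where e2: "e2 > 0" "ball z e2 \<subseteq> D" using D_open z open_contains_ball by blast
  have "L-lipschitz_on (ball z (min e1 e2)) grad\<^sub>\<mu>" using e1(2) by (rule lipschitz_on_subset) auto
  thus thesis using e1 e2 by (intro that[of "min e1 e2"]) auto
qed

lemma grad_continuous_on: "continuous_on D grad\<^sub>\<mu>"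
proof (rule continuous_at_imp_continuous_on, clarify)
  fix z assume "z \<in> D"
  then obtain e L where "e > 0" "L-lipschitz_on (ball z e) grad\<^sub>\<mu>"
    using grad_lipschitz_on_ball by blast
  thus "isCont grad\<^sub>\<mu> z"
    using lipschitz_on_continuous_on continuous_on_interior by (metis centre_in_ball interior_ball)
qed

lemma T_nonempty:
  assumes "0 < \<gamma>" "ereal \<gamma> < gamma_g g"
  shows "T \<gamma> z \<noteq> {}"
proof -
  obtain \<gamma>' where "\<gamma>' \<in> prox_bdd_set g" "\<gamma> < \<gamma>'"
    using assms(2) unfolding gamma_g_def by (auto simp: less_Sup_iff)
  moreover obtain w0 where "g w0 \<noteq> \<infinity>" using g_proper by blast
  ultimately show ?thesis
    unfolding Tmu_def using prox_nonempty[OF g_lsc] assms(1) by blast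
qed

lemma accept_if_lipschitz:
  assumes S: "convex S" "S \<subseteq> D" and L: "L-lipschitz_on S grad\<^sub>\<mu>"
    and zS: "z \<in> S" and zbS: "zb \<in> S"
    and \<gamma>: "0 < \<gamma>" "L * \<gamma> \<le> \<alpha>" and zb: "zb \<in> T \<gamma> z" and gz: "g z \<noteq> \<infinity>"
  shows "accept \<alpha> \<gamma> z zb"
proof -
  define d where "d = zb - z"
  have zD: "z \<in> D" and zbD: "zb \<in> D" using S zS zbS by auto
  have fb: "g zb + ereal ((norm d)\<^sup>2 / (2*\<gamma>) + inner (grad\<^sub>\<mu> z) d) \<le> g z"
    using prox_grad_step_ineq[OF zb[unfolded Tmu_def] \<gamma>(1)] by (simp add: d_def)
  obtain Gz where Gz: "g z = ereal Gz" using g_real[OF gz] by blast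
  hence "g zb \<noteq> \<infinity>" using fb by auto
  then obtain Gb where Gb: "g zb = ereal Gb" using g_real by blast
  have "fmu_real zb \<le> fmu_real z + inner (grad\<^sub>\<mu> z) d + L / 2 * (norm d)\<^sup>2"
    unfolding d_def using S zS zbS L by (intro descent_lemma fmu_real_has_derivative) auto
  moreover have "L / 2 * (norm d)\<^sup>2 \<le> \<alpha> / (2*\<gamma>) * (norm d)\<^sup>2"
    using \<gamma> by (intro mult_right_mono) (simp_all add: field_simps)
  moreover have "\<alpha> / (2*\<gamma>) * (norm d)\<^sup>2 - (norm d)\<^sup>2 / (2*\<gamma>) = - ((1 - \<alpha>) / (2*\<gamma>) * (norm d)\<^sup>2)"
    using \<gamma> by (simp add: field_simps)
  ultimately have "fmu_real zb + Gb \<le> fmu_real z + Gz - (1 - \<alpha>) / (2*\<gamma>) * (norm d)\<^sup>2"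
    using fb by (simp add: Gz Gb)
  moreover have "norm (grad\<^sub>\<mu> zb - grad\<^sub>\<mu> z) \<le> \<alpha> / \<gamma> * norm d"
  proof -
    have "norm (grad\<^sub>\<mu> zb - grad\<^sub>\<mu> z) \<le> L * norm d"
      using lipschitz_on_normD[OF L zbS zS] by (simp add: d_def)
    also have "\<dots> \<le> \<alpha> / \<gamma> * norm d" using \<gamma> by (intro mult_right_mono) (simp_all add: field_simps)
    finally show ?thesis .
  qed
  ultimately show ?thesis
    using zbD by (simp add: ipfb_accept_def qmu_eq[OF zD] qmu_eq[OF zbD] Gz Gb d_def) (simp add: D_def)
qed

lemma fmu_real_lower_estimate:
  assumes z: "z \<in> D" and e: "e > 0"
  obtains \<delta> where "\<delta> > 0"
    "\<And>w. norm (w - z) < \<delta> \<Longrightarrow> w \<in> D \<and> fmu_real z + inner (grad\<^sub>\<mu> z) (w - z) - e * norm (w - z) \<le> fmu_real w"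
proof -
  obtain d1 where d1: "d1 > 0" "\<And>w. norm (w - z) < d1 \<Longrightarrow>
      norm (fmu_real w - fmu_real z - inner (grad\<^sub>\<mu> z) (w - z)) \<le> e * norm (w - z)"
    using fmu_real_has_derivative[OF z] e unfolding has_derivative_at_alt by meson
  obtain d2 where d2: "d2 > 0" "ball z d2 \<subseteq> D" using D_open z open_contains_ball by blast
  have "w \<in> D \<and> fmu_real z + inner (grad\<^sub>\<mu> z) (w - z) - e * norm (w - z) \<le> fmu_real w"
    if "norm (w - z) < min d1 d2" for w
    using that d1(2)[of w] d2(2) abs_le_D2 by (fastforce simp: dist_norm norm_minus_commute)
  thus thesis using d1 d2 that[of "min d1 d2"] by simp
qed

lemma frechet_subgradient_of_proximal:
  assumes z: "z \<in> D" "g z \<noteq> \<infinity>" and \<sigma>: "0 \<le> \<sigma>"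
    and prox_sub: "\<And>u. g z + ereal (inner v (u - z) - \<sigma> * (norm (u - z))\<^sup>2) \<le> g u"
  shows "grad\<^sub>\<mu> z + v \<in> frechet_subdiff q\<^sub>\<mu> z"
  unfolding frechet_subdiff_def
proof (intro CollectI conjI allI impI)
  obtain Gz where Gz: "g z = ereal Gz" using g_real[OF z(2)] by blast
  show "\<bar>q\<^sub>\<mu> z\<bar> \<noteq> \<infinity>" by (simp add: qmu_eq[OF z(1)] Gz)
  fix e :: real assume e: "e > 0"
  obtain \<delta>1 where \<delta>1: "\<delta>1 > 0" "\<And>w. norm (w - z) < \<delta>1 \<Longrightarrow>
      w \<in> D \<and> fmu_real z + inner (grad\<^sub>\<mu> z) (w - z) - e/2 * norm (w - z) \<le> fmu_real w"
    using fmu_real_lower_estimate[OF z(1), of "e/2"] e by auto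
  \<comment> \<open>within distance \<open>e / (2\<sigma> + 1)\<close> the quadratic term \<open>\<sigma>\<parallel>w - z\<parallel>\<^sup>2\<close> is at most \<open>e/2 \<parallel>w - z\<parallel>\<close>\<close>
  define \<delta> where "\<delta> = min \<delta>1 (e / (2*\<sigma> + 1))"
  have "q\<^sub>\<mu> z + ereal (inner (grad\<^sub>\<mu> z + v) (w - z) - e * norm (w - z)) \<le> q\<^sub>\<mu> w"
    if w: "norm (w - z) < \<delta>" for w
  proof (cases "g w = \<infinity>")
    case False
    then obtain Gw where Gw: "g w = ereal Gw" using g_real by blast
    have "\<sigma> * norm (w - z) \<le> \<sigma> * (e / (2*\<sigma> + 1))"
      using w \<sigma> by (intro mult_left_mono) (auto simp: \<delta>_def)
    also have "\<dots> \<le> e/2" using \<sigma> e by (simp add: field_simps)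
    finally have "\<sigma> * norm (w - z) * norm (w - z) \<le> e/2 * norm (w - z)"
      by (rule mult_right_mono) simp
    moreover have "Gz + inner v (w - z) - \<sigma> * (norm (w - z))\<^sup>2 \<le> Gw"
      using prox_sub[of w] by (simp add: Gz Gw)
    moreover have "w \<in> D" "fmu_real z + inner (grad\<^sub>\<mu> z) (w - z) - e/2 * norm (w - z) \<le> fmu_real w"
      using \<delta>1(2)[of w] w by (auto simp: \<delta>_def)
    ultimately show ?thesis
      by (simp add: qmu_eq qmu_eq[OF z(1)] Gz Gw inner_add_left power2_eq_square)
  qed (use w \<delta>1(2)[of w] in \<open>auto simp: \<delta>_def qmu_eq\<close>)
  moreover have "\<delta> > 0" using \<delta>1 e \<sigma> by (simp add: \<delta>_def)
  ultimately show "\<exists>\<delta>>0. \<forall>w. norm (w - z) < \<delta> \<longrightarrow>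
      q\<^sub>\<mu> z + ereal (inner (grad\<^sub>\<mu> z + v) (w - z) - e * norm (w - z)) \<le> q\<^sub>\<mu> w"
    by blast
qed

lemma residual_in_frechet_subdiff:
  assumes zb: "zb \<in> T \<gamma> z" and \<gamma>: "0 < \<gamma>" and zbD: "zb \<in> D" and gzb: "g zb \<noteq> \<infinity>"
  shows "(1/\<gamma>) *\<^sub>R (z - zb) - grad\<^sub>\<mu> z + grad\<^sub>\<mu> zb \<in> frechet_subdiff q\<^sub>\<mu> zb"
proof -
  define v where "v = (1/\<gamma>) *\<^sub>R (z - \<gamma> *\<^sub>R grad\<^sub>\<mu> z - zb)"
  have "g zb + ereal (inner v (u - zb) - 1 / (2*\<gamma>) * (norm (u - zb))\<^sup>2) \<le> g u" for u
    using prox_subgradient_ineq[OF zb[unfolded Tmu_def] \<gamma>, of u] by (simp add: v_def)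
  from frechet_subgradient_of_proximal[OF zbD gzb _ this] \<gamma>
  have "grad\<^sub>\<mu> zb + v \<in> frechet_subdiff q\<^sub>\<mu> zb" by simp
  moreover have "grad\<^sub>\<mu> zb + v = (1/\<gamma>) *\<^sub>R (z - zb) - grad\<^sub>\<mu> z + grad\<^sub>\<mu> zb"
    using \<gamma> by (simp add: v_def algebra_simps)
  ultimately show ?thesis by simp
qed

lemma sublevel_limit_in_D:
  assumes lim: "zz \<longlonglongrightarrow> zs" and bdd: "\<And>k. q\<^sub>\<mu> (zz k) \<le> ereal K"
  shows "zs \<in> D"
proof -
  define M where "M = (K - q_inf) / \<mu>"
  have zD: "zz k \<in> D" for k using bdd[of k] by (intro qmu_finiteD(1)) auto
  have barrier_le: "(\<Sum>i<m. b (c i (zz k))) \<le> M" for k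
  proof -
    have "ereal (q_inf + \<mu> * (\<Sum>i<m. b (c i (zz k)))) \<le> ereal K"
      using qmu_ge_q_inf[OF zD[of k]] bdd[of k] by (rule order_trans)
    thus ?thesis using mu_pos by (simp add: M_def field_simps)
  qed
  \<comment> \<open>\<open>b\<close> blows up at \<open>0\<^sup>-\<close> while the barrier stays below \<open>M\<close>, so the constraint values stay below some \<open>t0 < 0\<close>\<close>
  have "eventually (\<lambda>t. M + 1 \<le> b t) (at_left 0)" using b_blowup by (simp add: filterlim_at_top)
  then obtain t0 :: real where t0: "t0 < 0" "\<And>t. t0 < t \<Longrightarrow> t < 0 \<Longrightarrow> M + 1 \<le> b t"
    unfolding eventually_at_left_field by blast
  have "c i zs \<le> t0" if i: "i < m" for i
  proof (rule LIMSEQ_le_const2)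
    show "(\<lambda>k. c i (zz k)) \<longlonglongrightarrow> c i zs"
      by (rule isCont_tendsto_compose[OF has_derivative_continuous[OF c_grad[OF i]] lim])
    have "c i (zz k) \<le> t0" for k
    proof (rule ccontr)
      assume "\<not> c i (zz k) \<le> t0"
      moreover have "c i (zz k) < 0" using zD[of k] i by (simp add: D_def)
      moreover have "b (c i (zz k)) \<le> (\<Sum>i<m. b (c i (zz k)))"
        using i zD[of k] by (intro member_le_sum b_nonneg) (auto simp: D_def)
      ultimately show False using t0(2) barrier_le[of k] by force
    qed
    thus "\<exists>N. \<forall>k\<ge>N. c i (zz k) \<le> t0" by blast
  qed
  thus ?thesis using t0(1) unfolding D_def by fastforce
qed

lemma fb_step_uniformly_small:
  assumes S: "compact S" "S \<subseteq> D" and \<epsilon>: "\<epsilon> > 0"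
  obtains \<gamma>b where "\<gamma>b > 0"
    "\<And>z \<gamma> zb. z \<in> S \<Longrightarrow> q\<^sub>\<mu> z \<le> ereal K \<Longrightarrow> 0 < \<gamma> \<Longrightarrow> \<gamma> \<le> \<gamma>b \<Longrightarrow> zb \<in> T \<gamma> z \<Longrightarrow>
       norm (zb - z) \<le> \<epsilon>"
proof -
  obtain \<gamma>' B where \<gamma>': "\<gamma>' > 0" and B: "\<And>y. ereal B \<le> g y + ereal ((norm y)\<^sup>2 / (2*\<gamma>'))"
    using g_proxbdd unfolding prox_bounded_def prox_bdd_set_def by auto
  have "bounded (grad\<^sub>\<mu> ` S)"
    using S by (intro compact_imp_bounded compact_continuous_image continuous_on_subset[OF grad_continuous_on])
  then obtain A where A: "\<And>z. z \<in> S \<Longrightarrow> norm (grad\<^sub>\<mu> z) \<le> A" by (auto simp: bounded_iff)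
  have "continuous_on S f"
    using f_grad by (meson continuous_at_imp_continuous_on has_derivative_continuous)
  hence "bounded (f ` S)" using S by (intro compact_imp_bounded compact_continuous_image)
  then obtain M where M: "\<And>z. z \<in> S \<Longrightarrow> \<bar>f z\<bar> \<le> M" by (auto simp: bounded_iff)
  obtain R where R: "\<And>z. z \<in> S \<Longrightarrow> norm z \<le> R" using S compact_imp_bounded bounded_iff by metis
  define C where "C = K + M + A\<^sup>2 / 2 - B + (R + A)\<^sup>2 / \<gamma>'"
  have "((\<lambda>\<gamma>. sqrt (4*\<gamma> * C) + \<gamma> * A) \<longlongrightarrow> sqrt (4*0 * C) + 0 * A) (at_right 0)"
    by (intro tendsto_intros)
  hence "eventually (\<lambda>\<gamma>. sqrt (4*\<gamma> * C) + \<gamma> * A < \<epsilon>) (at_right 0)"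
    using \<epsilon> by (intro order_tendstoD(2)) auto
  then obtain b where b: "b > 0" "\<And>\<gamma>. 0 < \<gamma> \<Longrightarrow> \<gamma> < b \<Longrightarrow> sqrt (4*\<gamma> * C) + \<gamma> * A < \<epsilon>"
    unfolding eventually_at_right_field by auto
  define \<gamma>b where "\<gamma>b = min (b/2) (min 1 (\<gamma>'/4))"
  have "norm (zb - z) \<le> \<epsilon>"
    if z: "z \<in> S" "q\<^sub>\<mu> z \<le> ereal K" and \<gamma>: "0 < \<gamma>" "\<gamma> \<le> \<gamma>b" and zb: "zb \<in> T \<gamma> z" for z \<gamma> zb
  proof -
    have zD: "z \<in> D" using z S by auto
    have "ereal (f z) + g z \<le> q\<^sub>\<mu> z"
      using f_le_fmu_real[OF zD] by (simp add: qmu_eq[OF zD] add_right_mono)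
    also have "\<dots> \<le> ereal K" by (rule z(2))
    finally have "g z \<le> ereal (K + M)"
      using M[OF z(1)] by (cases "g z") (auto simp: abs_le_iff)
    moreover have "\<gamma> \<le> 1" "4*\<gamma> \<le> \<gamma>'" "\<gamma> < b" using \<gamma> b by (auto simp: \<gamma>b_def)
    ultimately show ?thesis
      using prox_grad_step_bound[OF zb[unfolded Tmu_def] \<gamma>(1) _ _ B _ A[OF z(1)] R[OF z(1)]] b(2) \<gamma>(1)
      by (fastforce simp: C_def)
  qed
  moreover have "\<gamma>b > 0" using \<gamma>' b by (simp add: \<gamma>b_def)
  ultimately show thesis using that by blast
qed

lemma small_stepsizes_accepted_near:
  assumes zs: "zs \<in> D" and \<alpha>: "0 < \<alpha>"
  obtains r \<gamma>b where "r > 0" "\<gamma>b > 0"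
    "\<And>z \<gamma> zb. norm (z - zs) < r \<Longrightarrow> q\<^sub>\<mu> z \<le> ereal K \<Longrightarrow> 0 < \<gamma> \<Longrightarrow> \<gamma> \<le> \<gamma>b \<Longrightarrow>
       zb \<in> T \<gamma> z \<Longrightarrow> accept \<alpha> \<gamma> z zb"
proof -
  obtain e L where e: "e > 0" "ball zs e \<subseteq> D" and L: "L-lipschitz_on (ball zs e) grad\<^sub>\<mu>"
    using grad_lipschitz_on_ball[OF zs] by blast
  have L0: "L \<ge> 0" using lipschitz_on_nonneg[OF L] .
  define r where "r = e / 2"
  have r: "r > 0" "cball zs r \<subseteq> ball zs e" using e by (auto simp: r_def)
  have "cball zs r \<subseteq> D" using r(2) e(2) by blast
  then obtain \<gamma>1 where \<gamma>1: "\<gamma>1 > 0" and small: "\<And>z \<gamma> zb. z \<in> cball zs r \<Longrightarrow> q\<^sub>\<mu> z \<le> ereal K \<Longrightarrow>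
      0 < \<gamma> \<Longrightarrow> \<gamma> \<le> \<gamma>1 \<Longrightarrow> zb \<in> T \<gamma> z \<Longrightarrow> norm (zb - z) \<le> r"
    using fb_step_uniformly_small[where K=K, OF compact_cball _ r(1)] by blast
  define \<gamma>b where "\<gamma>b = min \<gamma>1 (\<alpha> / (L + 1))"
  have "accept \<alpha> \<gamma> z zb"
    if z: "norm (z - zs) < r" "q\<^sub>\<mu> z \<le> ereal K" and \<gamma>: "0 < \<gamma>" "\<gamma> \<le> \<gamma>b" and zb: "zb \<in> T \<gamma> z"
    for z \<gamma> zb
  proof (rule accept_if_lipschitz[OF convex_ball e(2) L _ _ \<gamma>(1) _ zb])
    have "z \<in> cball zs r" using z(1) by (simp add: dist_norm norm_minus_commute)
    thus "z \<in> ball zs e" using r(2) by blast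
    have "norm (zb - z) \<le> r" using small[OF \<open>z \<in> cball zs r\<close> z(2) \<gamma>(1) _ zb] \<gamma>(2) by (simp add: \<gamma>b_def)
    hence "norm (zb - zs) < 2 * r" using z(1) norm_triangle_ineq[of "zb - z" "z - zs"] by simp
    thus "zb \<in> ball zs e" by (simp add: r_def dist_norm norm_minus_commute)
    have "L * \<gamma> \<le> (L + 1) * (\<alpha> / (L + 1))"
      using \<gamma> L0 \<alpha> by (intro mult_mono) (simp_all add: \<gamma>b_def)
    thus "L * \<gamma> \<le> \<alpha>" using L0 by simp
    show "g z \<noteq> \<infinity>" using z(2) by (intro qmu_finiteD(2)) auto
  qed
  moreover have "\<gamma>b > 0" using \<gamma>1 \<alpha> L0 by (simp add: \<gamma>b_def)
  ultimately show thesis using that r(1) by blast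
qed

end

section \<open>Algorithm IP-FB\<close>

lemma convergent_if_steps_bounded_by_decrease:
  fixes z :: "nat \<Rightarrow> 'a::banach" and \<Phi> :: "nat \<Rightarrow> real"
  assumes steps: "\<And>k. norm (z (Suc k) - z k) \<le> C * (\<Phi> k - \<Phi> (Suc k))"
    and C: "C \<ge> 0" and bdd: "\<And>k. Q \<le> \<Phi> k"
  shows "convergent z"
proof -
  have partial: "(\<Sum>k<n. norm (z (Suc k) - z k)) \<le> C * (\<Phi> 0 - \<Phi> n)" for n
  proof (induction n)
    case (Suc n) thus ?case using steps[of n] by (auto simp: right_diff_distrib)
  qed simp
  have "summable (\<lambda>k. norm (z (Suc k) - z k))"
  proof (rule summableI_nonneg_bounded)
    fix n
    have "C * (\<Phi> 0 - \<Phi> n) \<le> C * (\<Phi> 0 - Q)" using bdd C by (intro mult_left_mono) auto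
    thus "(\<Sum>k<n. norm (z (Suc k) - z k)) \<le> C * (\<Phi> 0 - Q)" using partial[of n] by linarith
  qed simp
  hence "convergent (\<lambda>n. z 0 + (\<Sum>k<n. z (Suc k) - z k))"
    by (intro convergent_add convergent_const) (simp add: summable_norm_cancel flip: summable_iff_convergent)
  thus ?thesis by (simp add: sum_lessThan_telescope)
qed

locale ipfb = barrier_problem f df g m c dc b db d2b \<mu>
  for f :: "'a::euclidean_space \<Rightarrow> real" and df g m c dc b db d2b \<mu> +
  fixes z0 :: 'a and \<epsilon> \<gamma>0 \<alpha> \<beta> :: real
  assumes z0_F: "g z0 \<noteq> \<infinity>" "\<forall>i<m. c i z0 < 0"
    and eps_pos: "\<epsilon> > 0"
    and gamma0: "\<gamma>0 > 0" "ereal \<gamma>0 < gamma_g g"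
    and alpha: "0 < \<alpha>" "\<alpha> < 1"
    and beta: "0 < \<beta>" "\<beta> < 1"
begin

abbreviation "step \<equiv> ipfb_step f df g c dc m b db \<mu> \<epsilon> \<alpha> \<beta>"
abbreviation "residual \<equiv> ipfb_residual df c dc m db \<mu>"

fun invariant :: "'a ipfb_state \<Rightarrow> bool" where
  "invariant (Cont \<gamma> z) \<longleftrightarrow> 0 < \<gamma> \<and> \<gamma> \<le> \<gamma>0 \<and> q\<^sub>\<mu> z \<le> q\<^sub>\<mu> z0"
| "invariant (Ret z) \<longleftrightarrow> q\<^sub>\<mu> z \<le> q\<^sub>\<mu> z0 \<and> frechet_subdiff q\<^sub>\<mu> z \<noteq> {}
    \<and> infdist 0 (frechet_subdiff q\<^sub>\<mu> z) \<le> \<epsilon>"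

lemma qmu_z0_finite: "q\<^sub>\<mu> z0 \<noteq> \<infinity>"
  using z0_F g_real[of z0] by (simp add: qmu_eq D_def)

lemma qmu_finite_below_z0: "q\<^sub>\<mu> z \<le> q\<^sub>\<mu> z0 \<Longrightarrow> q\<^sub>\<mu> z \<noteq> \<infinity>"
  using qmu_z0_finite by auto

lemma accept_imp_qmu_le:
  assumes "accept \<alpha> \<gamma> z zb" "0 < \<gamma>"
  shows "q\<^sub>\<mu> zb \<le> q\<^sub>\<mu> z"
proof -
  have "q\<^sub>\<mu> zb \<le> q\<^sub>\<mu> z - ereal ((1 - \<alpha>) / (2 * \<gamma>) * (norm (zb - z))\<^sup>2)"
    using assms(1) by (simp add: ipfb_accept_def)
  also have "\<dots> \<le> q\<^sub>\<mu> z" using assms(2) alpha by (cases "q\<^sub>\<mu> z") auto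
  finally show ?thesis .
qed

lemma no_step_from_Ret: "\<not> step (Ret z) s"
  by (auto elim: ipfb_step.cases)

lemma invariant_step:
  assumes "invariant s" "step s s'"
  shows "invariant s'"
  using assms(2,1)
proof cases
  case (backtrack zb \<gamma> z)
  thus ?thesis using assms(1) beta by (auto intro: order_trans[OF mult_left_le_one_le])
next
  case (return zb \<gamma> z)
  hence zb: "q\<^sub>\<mu> zb \<le> q\<^sub>\<mu> z0" using accept_imp_qmu_le assms(1) by (auto intro: order_trans)
  hence "zb \<in> D" "g zb \<noteq> \<infinity>" using qmu_finiteD qmu_finite_below_z0 by auto
  with return have "(1/\<gamma>) *\<^sub>R (z - zb) - grad\<^sub>\<mu> z + grad\<^sub>\<mu> zb \<in> frechet_subdiff q\<^sub>\<mu> zb"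
    using assms(1) by (intro residual_in_frechet_subdiff) auto
  moreover have "infdist 0 (frechet_subdiff q\<^sub>\<mu> zb) \<le> \<epsilon>"
    using infdist_le[OF calculation, of 0] return by (simp add: ipfb_residual_def dist_0_norm)
  ultimately show ?thesis using return zb by auto
next
  case (continue zb \<gamma> z)
  thus ?thesis using accept_imp_qmu_le[of \<gamma> z zb] assms(1) by (auto intro: order_trans)
qed

lemma invariant_reachable:
  assumes "step\<^sup>*\<^sup>* (Cont \<gamma>0 z0) s"
  shows "invariant s"
  using assms by (induction rule: rtranclp_induct) (use gamma0 invariant_step in auto)

lemma progress:
  assumes "invariant (Cont \<gamma> z)"
  shows "\<exists>s'. step (Cont \<gamma> z) s'"
proof -
  have "ereal \<gamma> \<le> ereal \<gamma>0" using assms by simp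
  hence "ereal \<gamma> < gamma_g g" using gamma0(2) by (rule le_less_trans)
  then obtain zb where zb: "zb \<in> T \<gamma> z" using T_nonempty[of \<gamma> z] assms by auto
  thus ?thesis using ipfb_step.intros by metis
qed

definition dec_rate :: real where
  "dec_rate = (1 - \<alpha>) * \<epsilon>\<^sup>2 / (2 * (1 + \<alpha>)\<^sup>2)"

definition len_rate :: real where
  "len_rate = 2 * (1 + \<alpha>) / ((1 - \<alpha>) * \<epsilon>)"

lemma dec_rate_pos: "dec_rate > 0"
  using alpha eps_pos by (simp add: dec_rate_def)

lemma len_rate_pos: "len_rate > 0"
  using alpha eps_pos by (simp add: len_rate_def)

lemma continue_step_length_gt:
  assumes acc: "accept \<alpha> \<gamma> z zb" and res: "\<not> residual \<gamma> z zb \<le> \<epsilon>" and \<gamma>: "0 < \<gamma>"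
  shows "\<epsilon> * \<gamma> / (1 + \<alpha>) < norm (zb - z)"
proof -
  have "(1/\<gamma>) *\<^sub>R (z - zb) - grad\<^sub>\<mu> z + grad\<^sub>\<mu> zb = (1/\<gamma>) *\<^sub>R (z - zb) + (grad\<^sub>\<mu> zb - grad\<^sub>\<mu> z)"
    by simp
  hence "\<epsilon> < norm ((1/\<gamma>) *\<^sub>R (z - zb) + (grad\<^sub>\<mu> zb - grad\<^sub>\<mu> z))"
    using res by (simp only: ipfb_residual_def not_le)
  also have "\<dots> \<le> norm ((1/\<gamma>) *\<^sub>R (z - zb)) + norm (grad\<^sub>\<mu> zb - grad\<^sub>\<mu> z)"
    by (rule norm_triangle_ineq)
  also have "\<dots> \<le> norm (zb - z) / \<gamma> + \<alpha> / \<gamma> * norm (zb - z)"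
    using acc \<gamma> by (simp add: ipfb_accept_def norm_minus_commute)
  also have "\<dots> = (1 + \<alpha>) * norm (zb - z) / \<gamma>" by (simp add: distrib_right add_divide_distrib)
  finally show ?thesis using \<gamma> alpha by (simp add: field_simps)
qed

lemma continue_decrease:
  assumes acc: "accept \<alpha> \<gamma> z zb" and res: "\<not> residual \<gamma> z zb \<le> \<epsilon>" and \<gamma>: "0 < \<gamma>"
    and fin: "q\<^sub>\<mu> z \<noteq> \<infinity>"
  shows "qval zb \<le> qval z - dec_rate * \<gamma>" and "norm (zb - z) \<le> len_rate * (qval z - qval zb)"
proof -
  define n where "n = norm (zb - z)"
  define a where "a = (1 - \<alpha>) / (2 * \<gamma>)"
  define l where "l = \<epsilon> * \<gamma> / (1 + \<alpha>)"
  have a: "a > 0" using alpha \<gamma> by (simp add: a_def)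
  have l: "0 < l" "l < n"
    using continue_step_length_gt[OF acc res \<gamma>] eps_pos \<gamma> alpha by (simp_all add: l_def n_def)
  have "q\<^sub>\<mu> zb \<le> q\<^sub>\<mu> z - ereal (a * n\<^sup>2)" using acc by (simp add: ipfb_accept_def a_def n_def)
  hence "q\<^sub>\<mu> zb \<le> ereal (qval z - a * n\<^sup>2)" by (simp add: qmu_finite_eq[OF fin])
  moreover from this have "q\<^sub>\<mu> zb = ereal (qval zb)" by (intro qmu_finite_eq) auto
  ultimately have decrease: "a * n\<^sup>2 \<le> qval z - qval zb" by simp
  have "a * l\<^sup>2 = (1 - \<alpha>) * \<epsilon>\<^sup>2 * \<gamma>\<^sup>2 / (2 * \<gamma> * (1 + \<alpha>)\<^sup>2)"
    by (simp add: a_def l_def power_divide power_mult_distrib)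
  also have "\<dots> = dec_rate * \<gamma>"
    using \<gamma> by (simp add: dec_rate_def power2_eq_square)
  finally have "dec_rate * \<gamma> = a * l\<^sup>2" ..
  also have "\<dots> \<le> a * n\<^sup>2" using a l by (intro mult_left_mono power_mono) auto
  finally show "qval zb \<le> qval z - dec_rate * \<gamma>" using decrease by simp
  have "len_rate * (a * l) = 1"
    using \<gamma> alpha eps_pos by (simp add: len_rate_def a_def l_def)
  hence "n = len_rate * (a * l * n)" by (metis mult.assoc mult_1)
  also have "\<dots> \<le> len_rate * (a * n\<^sup>2)"
    using a l len_rate_pos by (intro mult_left_mono) (auto simp: power2_eq_square)
  also have "\<dots> \<le> len_rate * (qval z - qval zb)"
    using decrease len_rate_pos by (intro mult_left_mono) auto
  finally show "norm (zb - z) \<le> len_rate * (qval z - qval zb)" by (simp add: n_def)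
qed

lemma step_length_bound:
  assumes "invariant (Cont \<gamma> z)" "step (Cont \<gamma> z) (Cont \<gamma>' z')"
  shows "norm (z' - z) \<le> len_rate * (qval z - qval z')"
  using assms(2)
proof cases
  case continue
  thus ?thesis using assms(1) qmu_finite_below_z0 by (intro continue_decrease(2)) auto
qed simp

lemma step_potential_decrease:
  assumes "invariant (Cont \<gamma> z)" "step (Cont \<gamma> z) (Cont \<gamma>' z')"
  shows "qval z' + \<gamma>' \<le> qval z + \<gamma> - min (1 - \<beta>) dec_rate * \<gamma>"
  using assms(2)
proof cases
  case backtrack
  have "min (1 - \<beta>) dec_rate * \<gamma> \<le> (1 - \<beta>) * \<gamma>" using assms(1) by (intro mult_right_mono) auto
  thus ?thesis using backtrack by (simp add: algebra_simps)
next
  case continue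
  have "min (1 - \<beta>) dec_rate * \<gamma> \<le> dec_rate * \<gamma>" using assms(1) by (intro mult_right_mono) auto
  moreover have "qval z' \<le> qval z - dec_rate * \<gamma>"
    using continue assms(1) qmu_finite_below_z0 by (intro continue_decrease(1)) auto
  ultimately show ?thesis using continue by simp
qed

lemma step_stepsize_lower:
  assumes "step (Cont \<gamma> z) (Cont \<gamma>' z')"
    and small_accepted: "\<And>zb. zb \<in> T \<gamma> z \<Longrightarrow> \<gamma> \<le> \<gamma>b \<Longrightarrow> accept \<alpha> \<gamma> z zb"
  shows "min \<gamma> (\<beta> * \<gamma>b) \<le> \<gamma>'"
  using assms(1)
proof cases
  case (backtrack zb)
  hence "\<gamma>b < \<gamma>" using small_accepted by force
  hence "\<beta> * \<gamma>b \<le> \<beta> * \<gamma>" using beta by simp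
  thus ?thesis using backtrack by simp
qed simp

lemma run_stepsize_lower:
  assumes steps: "\<And>i. i < n \<Longrightarrow> step (Cont (\<gamma> i) (z i)) (Cont (\<gamma> (Suc i)) (z (Suc i)))"
    and small_accepted: "\<And>i zb. i < n \<Longrightarrow> zb \<in> T (\<gamma> i) (z i) \<Longrightarrow> \<gamma> i \<le> \<gamma>b \<Longrightarrow> accept \<alpha> (\<gamma> i) (z i) zb"
  shows "min (\<gamma> 0) (\<beta> * \<gamma>b) \<le> \<gamma> n"
  using assms
proof (induction n)
  case (Suc n)
  have "min (\<gamma> n) (\<beta> * \<gamma>b) \<le> \<gamma> (Suc n)"
    using Suc.prems by (intro step_stepsize_lower) auto
  thus ?case using Suc by force
qed simp

lemma run_potential_decrease:
  assumes steps: "\<And>i. i < n \<Longrightarrow> step (Cont (\<gamma> i) (z i)) (Cont (\<gamma> (Suc i)) (z (Suc i)))"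
    and inv: "\<And>i. invariant (Cont (\<gamma> i) (z i))" and lower: "\<And>i. \<gamma>min \<le> \<gamma> i"
  shows "qval (z n) + \<gamma> n \<le> qval (z 0) + \<gamma> 0 - real n * (min (1 - \<beta>) dec_rate * \<gamma>min)"
  using steps
proof (induction n)
  case (Suc n)
  have "min (1 - \<beta>) dec_rate * \<gamma>min \<le> min (1 - \<beta>) dec_rate * \<gamma> n"
    using lower beta dec_rate_pos by (intro mult_left_mono) auto
  thus ?case using step_potential_decrease[OF inv Suc.prems[of n]] Suc by (simp add: algebra_simps)
qed simp

theorem no_infinite_run: "\<not> (\<exists>s. s 0 = Cont \<gamma>0 z0 \<and> (\<forall>k. step (s k) (s (Suc k))))"
proof
  assume "\<exists>s. s 0 = Cont \<gamma>0 z0 \<and> (\<forall>k. step (s k) (s (Suc k)))"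
  then obtain s where s0: "s 0 = Cont \<gamma>0 z0" and run: "\<And>k. step (s k) (s (Suc k))" by blast
  have "\<exists>\<gamma> z. s k = Cont \<gamma> z" for k
    using run[of k] no_step_from_Ret by (cases "s k") auto
  then obtain \<gamma> z where s: "\<And>k. s k = Cont (\<gamma> k) (z k)" by metis
  have "step\<^sup>*\<^sup>* (Cont \<gamma>0 z0) (s k)" for k
    by (induction k) (auto simp: s0 intro: rtranclp.rtrancl_into_rtrancl run)
  hence inv: "invariant (Cont (\<gamma> k) (z k))" for k using invariant_reachable s by metis
  have stepk: "step (Cont (\<gamma> k) (z k)) (Cont (\<gamma> (Suc k)) (z (Suc k)))" for k using run s by metis
  have below: "q\<^sub>\<mu> (z k) \<le> ereal (qval z0)" for k
    using inv[of k] qmu_finite_eq[OF qmu_z0_finite] by simp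
  have bdd: "q_inf \<le> qval (z k)" for k
    using inv[of k] qmu_finite_below_z0 q_inf_le_qval by simp
  have "convergent z"
    using step_length_bound[OF inv stepk] less_imp_le[OF len_rate_pos] bdd
    by (rule convergent_if_steps_bounded_by_decrease[where \<Phi> = "\<lambda>k. qval (z k)"])
  then obtain zlim where lim: "z \<longlonglongrightarrow> zlim" by (auto simp: convergent_def)
  have "zlim \<in> D" using sublevel_limit_in_D[OF lim below] .
  then obtain r \<gamma>b where r: "r > 0" "\<gamma>b > 0" and accepted: "\<And>z' \<gamma>' zb. norm (z' - zlim) < r \<Longrightarrow>
      q\<^sub>\<mu> z' \<le> ereal (qval z0) \<Longrightarrow> 0 < \<gamma>' \<Longrightarrow> \<gamma>' \<le> \<gamma>b \<Longrightarrow> zb \<in> T \<gamma>' z' \<Longrightarrow> accept \<alpha> \<gamma>' z' zb"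
    using small_stepsizes_accepted_near[where K = "qval z0", OF _ alpha(1)] by blast
  obtain N where N: "\<And>k. k \<ge> N \<Longrightarrow> norm (z k - zlim) < r"
    using lim r(1) unfolding LIMSEQ_iff by blast
  define \<gamma>min where "\<gamma>min = min (\<gamma> N) (\<beta> * \<gamma>b)"
  have \<gamma>min: "\<gamma>min > 0" using inv[of N] r beta by (simp add: \<gamma>min_def)
  have \<gamma>_lower: "\<gamma>min \<le> \<gamma> (N + j)" for j
    unfolding \<gamma>min_def using inv N below
    by (intro run_stepsize_lower[where \<gamma> = "\<lambda>i. \<gamma> (N + i)" and z = "\<lambda>i. z (N + i)", simplified]
        stepk accepted) auto
  define d where "d = min (1 - \<beta>) dec_rate * \<gamma>min"
  have d: "d > 0" using beta dec_rate_pos \<gamma>min by (simp add: d_def)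
  have potential: "qval (z (N + j)) + \<gamma> (N + j) \<le> qval (z N) + \<gamma> N - real j * d" for j
    unfolding d_def using inv \<gamma>_lower
    by (intro run_potential_decrease[where \<gamma> = "\<lambda>i. \<gamma> (N + i)" and z = "\<lambda>i. z (N + i)", simplified]
        stepk) auto
  obtain j where "qval (z N) + \<gamma> N - q_inf < real j * d" using ex_less_of_nat_mult[OF d] by blast
  thus False using potential[of j] bdd[of "N + j"] inv[of "N + j"] by simp
qed

end

theorem corollary3p6:
  fixes f :: "'a::euclidean_space \<Rightarrow> real" and df :: "'a \<Rightarrow> 'a"
    and g :: "'a \<Rightarrow> ereal"
    and m :: nat and c :: "nat \<Rightarrow> 'a \<Rightarrow> real" and dc :: "nat \<Rightarrow> 'a \<Rightarrow> 'a"
    and b db d2b :: "real \<Rightarrow> real"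
    and z0 :: 'a and \<mu> \<epsilon> \<gamma>0 \<alpha> \<beta> :: real
  assumes f_grad: "\<And>x. (f has_derivative (\<lambda>h. inner (df x) h)) (at x)"
    and f_lip: "locally_lipschitz df"
    and g_nonneginf: "\<And>x. g x \<noteq> -\<infinity>"
    and g_proper: "\<exists>x. g x \<noteq> \<infinity>"
    and g_lsc: "lsc g"
    and g_proxbdd: "prox_bounded g"
    and g_cont: "cont_rel_dom g"
    and c_grad: "\<And>i x. i < m \<Longrightarrow> (c i has_derivative (\<lambda>h. inner (dc i x) h)) (at x)"
    and c_lip: "\<And>i. i < m \<Longrightarrow> locally_lipschitz (dc i)"
    and inf_finite: "\<bar>(INF x\<in>{x. \<forall>i<m. c i x \<le> 0}. ereal (f x) + g x)\<bar> \<noteq> \<infinity>"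
    and F_nonempty: "\<exists>x. g x \<noteq> \<infinity> \<and> (\<forall>i<m. c i x < 0)"
    and b_nonneg: "\<And>t. t < 0 \<Longrightarrow> b t \<ge> 0"
    and b_deriv: "\<And>t. t < 0 \<Longrightarrow> (b has_real_derivative db t) (at t)"
    and db_deriv: "\<And>t. t < 0 \<Longrightarrow> (db has_real_derivative d2b t) (at t)"
    and d2b_cont: "continuous_on {..<0} d2b"
    and db_pos: "\<And>t. t < 0 \<Longrightarrow> db t > 0"
    and b_blowup: "filterlim b at_top (at_left 0)"
    and z0_F: "g z0 \<noteq> \<infinity>" "\<forall>i<m. c i z0 < 0"
    and mu_pos: "\<mu> > 0" and eps_pos: "\<epsilon> > 0"
    and gamma0: "\<gamma>0 > 0" "ereal \<gamma>0 < gamma_g g"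
    and alpha: "0 < \<alpha>" "\<alpha> < 1"
    and beta: "0 < \<beta>" "\<beta> < 1"
  shows
    "\<not> (\<exists>s. s 0 = Cont \<gamma>0 z0 \<and> (\<forall>k. ipfb_step f df g c dc m b db \<mu> \<epsilon> \<alpha> \<beta> (s k) (s (Suc k))))
     \<and> (\<forall>\<gamma> z. (ipfb_step f df g c dc m b db \<mu> \<epsilon> \<alpha> \<beta>)\<^sup>*\<^sup>* (Cont \<gamma>0 z0) (Cont \<gamma> z) \<longrightarrow>
           (\<exists>s'. ipfb_step f df g c dc m b db \<mu> \<epsilon> \<alpha> \<beta> (Cont \<gamma> z) s'))
     \<and> (\<forall>zs. (ipfb_step f df g c dc m b db \<mu> \<epsilon> \<alpha> \<beta>)\<^sup>*\<^sup>* (Cont \<gamma>0 z0) (Ret zs) \<longrightarrow>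
           frechet_subdiff (qmu f g c m b \<mu>) zs \<noteq> {}
           \<and> infdist 0 (frechet_subdiff (qmu f g c m b \<mu>) zs) \<le> \<epsilon>
           \<and> qmu f g c m b \<mu> zs \<le> qmu f g c m b \<mu> z0)"
proof -
  interpret ipfb f df g m c dc b db d2b \<mu> z0 \<epsilon> \<gamma>0 \<alpha> \<beta>
    by unfold_locales (fact assms)+
  show ?thesis
  proof (intro conjI allI impI)
    show "\<not> (\<exists>s. s 0 = Cont \<gamma>0 z0 \<and> (\<forall>k. step (s k) (s (Suc k))))"
      by (rule no_infinite_run)
  next
    fix \<gamma> z assume "step\<^sup>*\<^sup>* (Cont \<gamma>0 z0) (Cont \<gamma> z)"
    thus "\<exists>s'. step (Cont \<gamma> z) s'" by (intro progress invariant_reachable)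
  next
    fix zs assume "step\<^sup>*\<^sup>* (Cont \<gamma>0 z0) (Ret zs)"
    from invariant_reachable[OF this]
    show "frechet_subdiff q\<^sub>\<mu> zs \<noteq> {}" "infdist 0 (frechet_subdiff q\<^sub>\<mu> zs) \<le> \<epsilon>"
      "q\<^sub>\<mu> zs \<le> q\<^sub>\<mu> z0"
      by auto
  qed
qed

end
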